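(* Consider the planar system $$\frac{dN}{dt}=rN\left(1-\frac{N}{K}-\frac{h}{w+N}\right)-\frac{aNP}{b+N^2},\qquad \frac{dP}{dt}=\frac{cNP}{b+N^2}-\delta P,$$ where $r,K,h,w,a,b,c,\delta$ are positive constants with $w<K$. Let $D=c^2-4b\delta^2$, $N_4=\frac{c+\sqrt{D}}{2\delta}$, $N_5=\frac{c-\sqrt{D}}{2\delta}$, $N_6=\frac{c}{2\delta}$, and $$P(N)=\frac{r(b+N^2)\left[(K-w)N-K(h-w)-N^2\right]}{Ka(w+N)},$$ and set $E_i=(N_i,P(N_i))$, $i=4,5,6$. Suppose $P(N_4)>0$, $P(N_5)>0$ and $P(N_6)>0$ (for whichever of these are defined). For $i=4,5$ let $$T_i=\frac{hrN_i}{(w+N_i)^2}+\frac{2aP(N_i)N_i^2}{(b+N_i^2)^2}-\frac{rN_i}{K}$$ (the trace of the Jacobian of the system at $E_i$). (i) If $b=\left(\frac{c}{2\delta}\right)^2$, then the coexistence equilibrium point $E_6$ is non-hyperbolic. (ii) If $b<\left(\frac{c}{2\delta}\right)^2$, then the coexistence equilibrium point $E_4$ is unstable; moreover, if $T_4<0$ then $E_4$ is a saddle, and if $T_5<0$ then $E_5$ is locally asymptotically stable.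
   Context: $N(t)$ is the prey density and $P(t)$ the predator density. A coexistence equilibrium is an equilibrium with both coordinates positive. An equilibrium is non-hyperbolic if the Jacobian matrix of the system at it has an eigenvalue with zero real part. *)

theory Defs
  imports "HOL-Analysis.Analysis"
begin

definition pp_field :: "real \<Rightarrow> real \<Rightarrow> real \<Rightarrow> real \<Rightarrow> real \<Rightarrow> real \<Rightarrow> real \<Rightarrow> real
    \<Rightarrow> real \<times> real \<Rightarrow> real \<times> real" where
  "pp_field r K h w a b c \<delta> = (\<lambda>(N, P).
     (r * N * (1 - N / K - h / (w + N)) - a * N * P / (b + N^2),
      c * N * P / (b + N^2) - \<delta> * P))"

text \<open>Prey-nullcline P(N).\<close>
definition Pnull :: "real \<Rightarrow> real \<Rightarrow> real \<Rightarrow> real \<Rightarrow> real \<Rightarrow> real \<Rightarrow> real \<Rightarrow> real" where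
  "Pnull r K h w a b N =
     r * (b + N^2) * ((K - w) * N - K * (h - w) - N^2) / (K * a * (w + N))"

definition Ddisc :: "real \<Rightarrow> real \<Rightarrow> real \<Rightarrow> real" where
  "Ddisc b c \<delta> = c^2 - 4 * b * \<delta>^2"

definition N4 :: "real \<Rightarrow> real \<Rightarrow> real \<Rightarrow> real" where
  "N4 b c \<delta> = (c + sqrt (Ddisc b c \<delta>)) / (2 * \<delta>)"

definition N5 :: "real \<Rightarrow> real \<Rightarrow> real \<Rightarrow> real" where
  "N5 b c \<delta> = (c - sqrt (Ddisc b c \<delta>)) / (2 * \<delta>)"

definition N6 :: "real \<Rightarrow> real \<Rightarrow> real" where
  "N6 c \<delta> = c / (2 * \<delta>)"

definition Tr :: "real \<Rightarrow> real \<Rightarrow> real \<Rightarrow> real \<Rightarrow> real \<Rightarrow> real \<Rightarrow> real \<Rightarrow> real" where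
  "Tr r K h w a b N = h * r * N / (w + N)^2 + 2 * a * Pnull r K h w a b N * N^2 / (b + N^2)^2
                      - r * N / K"

definition is_jacobian ::
  "(real \<times> real \<Rightarrow> real \<times> real) \<Rightarrow> real \<times> real \<Rightarrow> real \<Rightarrow> real \<Rightarrow> real \<Rightarrow> real \<Rightarrow> bool" where
  "is_jacobian F p j11 j12 j21 j22 \<longleftrightarrow>
     (F has_derivative (\<lambda>(u, v). (j11 * u + j12 * v, j21 * u + j22 * v))) (at p)"

definition is_eigenvalue2 :: "real \<Rightarrow> real \<Rightarrow> real \<Rightarrow> real \<Rightarrow> complex \<Rightarrow> bool" where
  "is_eigenvalue2 j11 j12 j21 j22 z \<longleftrightarrow>
     (of_real j11 - z) * (of_real j22 - z) - of_real j12 * of_real j21 = 0"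

definition equilibrium :: "(real \<times> real \<Rightarrow> real \<times> real) \<Rightarrow> real \<times> real \<Rightarrow> bool" where
  "equilibrium F p \<longleftrightarrow> F p = (0, 0)"

definition non_hyperbolic :: "(real \<times> real \<Rightarrow> real \<times> real) \<Rightarrow> real \<times> real \<Rightarrow> bool" where
  "non_hyperbolic F p \<longleftrightarrow> equilibrium F p \<and>
     (\<exists>j11 j12 j21 j22. is_jacobian F p j11 j12 j21 j22 \<and>
        (\<exists>z. is_eigenvalue2 j11 j12 j21 j22 z \<and> Re z = 0))"

definition saddle :: "(real \<times> real \<Rightarrow> real \<times> real) \<Rightarrow> real \<times> real \<Rightarrow> bool" where
  "saddle F p \<longleftrightarrow> equilibrium F p \<and>
     (\<exists>j11 j12 j21 j22. is_jacobian F p j11 j12 j21 j22 \<and>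
        (\<exists>l1 l2 :: real. l1 < 0 \<and> 0 < l2 \<and>
           is_eigenvalue2 j11 j12 j21 j22 (of_real l1) \<and>
           is_eigenvalue2 j11 j12 j21 j22 (of_real l2)))"

definition is_solution :: "(real \<times> real \<Rightarrow> real \<times> real) \<Rightarrow> (real \<Rightarrow> real \<times> real) \<Rightarrow> real \<Rightarrow> bool" where
  "is_solution F x T \<longleftrightarrow>
     (\<forall>t\<in>{0..<T}. (x has_vector_derivative F (x t)) (at t within {0..<T}))"

definition is_global_solution :: "(real \<times> real \<Rightarrow> real \<times> real) \<Rightarrow> (real \<Rightarrow> real \<times> real) \<Rightarrow> bool" where
  "is_global_solution F x \<longleftrightarrow>
     (\<forall>t\<ge>0. (x has_vector_derivative F (x t)) (at t within {0..}))"

definition lyapunov_stable :: "(real \<times> real \<Rightarrow> real \<times> real) \<Rightarrow> real \<times> real \<Rightarrow> bool" where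
  "lyapunov_stable F p \<longleftrightarrow>
     (\<forall>\<epsilon>>0. \<exists>\<eta>>0. \<forall>x T. is_solution F x T \<and> dist (x 0) p < \<eta> \<longrightarrow>
        (\<forall>t\<in>{0..<T}. dist (x t) p < \<epsilon>))"

definition unstable :: "(real \<times> real \<Rightarrow> real \<times> real) \<Rightarrow> real \<times> real \<Rightarrow> bool" where
  "unstable F p \<longleftrightarrow> equilibrium F p \<and> \<not> lyapunov_stable F p"

definition loc_asymp_stable :: "(real \<times> real \<Rightarrow> real \<times> real) \<Rightarrow> real \<times> real \<Rightarrow> bool" where
  "loc_asymp_stable F p \<longleftrightarrow> equilibrium F p \<and> lyapunov_stable F p \<and>
     (\<exists>\<eta>>0. \<forall>x. is_global_solution F x \<and> dist (x 0) p < \<eta> \<longrightarrow>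
        (x \<longlongrightarrow> p) at_top)"

end

theory Submission
  imports Defs
begin

(* At a coexistence equilibrium (N, P(N)) the predator equation forces c N / (b + N^2) = \<delta>,
   i.e. \<delta> N^2 - c N + \<delta> b = 0, and the Jacobian there is
   [[T(N), -a N / (b + N^2)], [c P(N) (b - N^2) / (b + N^2)^2, 0]],
   whose determinant has the sign of b - N^2. For b = (c / 2\<delta>)^2 the double root N6 = sqrt b gives
   determinant 0, hence the eigenvalue 0. For b < (c / 2\<delta>)^2 the roots satisfy N4 N5 = b and
   N5 < N4, so N5 < sqrt b < N4: at N4 the determinant is negative (a saddle), at N5 it is positive,
   and a negative trace makes E5 a sink.
   Nonlinear (in)stability follows from the linearisation through quadratic Lyapunov and Chetaev
   functions. Instability needs actual solutions; they are obtained by Picard iteration for the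
   field made globally Lipschitz by composing it with the projection onto a ball around E4. *)

section \<open>Differential inequalities and solutions of Lipschitz ODEs\<close>

lemma le_if_has_real_derivative_nonneg:
  fixes g g' :: "real \<Rightarrow> real"
  assumes "a \<le> b"
    and deriv: "\<And>s. s \<in> {a..b} \<Longrightarrow> (g has_real_derivative g' s) (at s within {a..b})"
    and nonneg: "\<And>s. a < s \<Longrightarrow> s < b \<Longrightarrow> 0 \<le> g' s"
  shows "g a \<le> g b"
proof (rule DERIV_nonneg_imp_increasing_open[OF \<open>a \<le> b\<close>])
  fix s assume "a < s" "s < b"
  then show "\<exists>y. (g has_real_derivative y) (at s) \<and> 0 \<le> y"
    using deriv[of s] nonneg[of s] by (auto simp: at_within_Icc_at)
qed (use deriv DERIV_continuous_on in blast)

lemma has_real_derivative_along_curve: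
  fixes V :: "'a::real_normed_vector \<Rightarrow> real"
  assumes "(V has_derivative DV) (at (x t))" and "(x has_vector_derivative v) (at t within S)"
  shows "((\<lambda>s. V (x s)) has_real_derivative DV v) (at t within S)"
proof -
  have "linear DV" using assms(1) by (rule has_derivative_linear)
  have "((V \<circ> x) has_derivative (DV \<circ> (\<lambda>h. h *\<^sub>R v))) (at t within S)"
    using diff_chain_within[OF assms(2)[unfolded has_vector_derivative_def]
        has_derivative_at_withinI[OF assms(1)]] .
  moreover have "DV \<circ> (\<lambda>h. h *\<^sub>R v) = (\<lambda>h. DV v * h)"
    using linear_cmul[OF \<open>linear DV\<close>] by (auto simp: fun_eq_iff)
  ultimately show ?thesis by (simp add: has_field_derivative_def o_def)
qed

lemma first_hitting_time:
  fixes f :: "real \<Rightarrow> real"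
  assumes "continuous_on {0..t} f" and "f 0 < c" and "0 \<le> t" and "c \<le> f t"
  shows "\<exists>t1. 0 < t1 \<and> t1 \<le> t \<and> c \<le> f t1 \<and> (\<forall>s\<in>{0..<t1}. f s < c)"
proof -
  define A where "A = {s \<in> {0..t}. c \<le> f s}"
  have "closed A"
    unfolding A_def using assms(1) by (intro continuous_on_closed_Collect_le continuous_intros) auto
  moreover have "bdd_below A" by (rule bdd_belowI[of _ 0]) (auto simp: A_def)
  moreover have "t \<in> A" using assms by (auto simp: A_def)
  ultimately have "Inf A \<in> A" using closed_contains_Inf by blast
  have "f s < c" if "s \<in> {0..<Inf A}" for s
    using cInf_lower[OF _ \<open>bdd_below A\<close>, of s] that \<open>Inf A \<in> A\<close> by (force simp: A_def)
  moreover have "Inf A \<noteq> 0" using \<open>Inf A \<in> A\<close> \<open>f 0 < c\<close> by (auto simp: A_def)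
  ultimately show ?thesis using \<open>Inf A \<in> A\<close> by (intro exI[of _ "Inf A"]) (auto simp: A_def)
qed

lemma le_initial_if_deriv_nonpos_below_level:
  fixes g g' :: "real \<Rightarrow> real"
  assumes deriv: "\<And>t. t \<in> {0..<T} \<Longrightarrow> (g has_real_derivative g' t) (at t within {0..<T})"
    and initial: "g 0 < c"
    and nonpos: "\<And>t. t \<in> {0..<T} \<Longrightarrow> g t < c \<Longrightarrow> g' t \<le> 0"
    and t: "t \<in> {0..<T}"
  shows "g t \<le> g 0"
proof -
  have deriv_on: "(g has_real_derivative g' u) (at u within {0..s})" if "s \<in> {0..<T}" "u \<in> {0..s}" for s u
    by (rule DERIV_subset[OF deriv]) (use that in auto)
  have below_imp_le: "g s \<le> g 0"
    if s: "s \<in> {0..<T}" and below: "\<And>u. u \<in> {0..<s} \<Longrightarrow> g u < c" for s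
  proof -
    have "- g 0 \<le> - g s"
      by (rule le_if_has_real_derivative_nonneg[where g' = "\<lambda>u. - g' u"])
        (use s deriv_on nonpos below in \<open>auto intro!: DERIV_minus\<close>)
    then show ?thesis by simp
  qed
  show ?thesis
  proof (cases "\<forall>u\<in>{0..<t}. g u < c")
    case True
    then show ?thesis using t by (intro below_imp_le) auto
  next
    case False
    then obtain u where "u \<in> {0..t}" "c \<le> g u" by force
    moreover have "continuous_on {0..u} g"
      using t \<open>u \<in> {0..t}\<close> by (intro DERIV_continuous_on[of _ _ g'] deriv_on) auto
    ultimately obtain t1 where "0 < t1" "t1 \<le> u" "c \<le> g t1" "\<forall>s\<in>{0..<t1}. g s < c"
      using first_hitting_time[of u g c] initial by auto
    then have "g t1 \<le> g 0" using t \<open>u \<in> {0..t}\<close> by (intro below_imp_le) auto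
    then show ?thesis using \<open>c \<le> g t1\<close> initial by simp
  qed
qed

lemma continuous_on_lipschitz_compose:
  fixes G :: "'a::real_normed_vector \<Rightarrow> 'b::real_normed_vector"
  assumes lip: "\<And>x y. norm (G x - G y) \<le> L * norm (x - y)" and "0 \<le> L" and "continuous_on S f"
  shows "continuous_on S (\<lambda>s. G (f s))"
proof -
  have "continuous_on UNIV G"
    by (rule lipschitz_on_continuous_on[of L], rule lipschitz_onI)
      (use lip \<open>0 \<le> L\<close> in \<open>auto simp: dist_norm\<close>)
  then show ?thesis using \<open>continuous_on S f\<close> by (rule continuous_on_compose2) auto
qed

lemma norm_integral_lipschitz_compose_diff_le:
  fixes G :: "'a::banach \<Rightarrow> 'a" and f g :: "real \<Rightarrow> 'a"
  assumes lip: "\<And>x y. norm (G x - G y) \<le> L * norm (x - y)" and "0 \<le> L" "0 \<le> u"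
    and "continuous_on {0..u} f" "continuous_on {0..u} g"
    and close: "\<And>s. s \<in> {0..u} \<Longrightarrow> norm (f s - g s) \<le> d"
  shows "norm (integral {0..u} (\<lambda>s. G (f s)) - integral {0..u} (\<lambda>s. G (g s))) \<le> L * d * u"
proof -
  have cont: "continuous_on {0..u} (\<lambda>s. G (f s))" "continuous_on {0..u} (\<lambda>s. G (g s))"
    using assms(4,5) by (auto intro: continuous_on_lipschitz_compose[OF lip \<open>0 \<le> L\<close>])
  have "integral {0..u} (\<lambda>s. G (f s)) - integral {0..u} (\<lambda>s. G (g s))
        = integral {0..u} (\<lambda>s. G (f s) - G (g s))"
    using cont by (simp add: integral_diff integrable_continuous_interval)
  also have "norm \<dots> \<le> (L * d) * (u - 0)"
  proof (rule integral_bound)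
    fix s assume "s \<in> {0..u}"
    show "norm (G (f s) - G (g s)) \<le> L * d"
      using lip[of "f s" "g s"] mult_left_mono[OF close[OF \<open>s \<in> {0..u}\<close>] \<open>0 \<le> L\<close>] by linarith
  qed (use cont \<open>0 \<le> u\<close> in \<open>auto intro: continuous_on_diff\<close>)
  finally show ?thesis by simp
qed

lemma picard_operator_exists:
  fixes G :: "'a::banach \<Rightarrow> 'a" and h :: real
  assumes lip: "\<And>x y. norm (G x - G y) \<le> L * norm (x - y)" and "0 \<le> L"
  shows "\<exists>\<Phi>. \<forall>f t. apply_bcontfun (\<Phi> f) t =
           \<xi> + integral {0..clamp 0 h t} (\<lambda>s. G (apply_bcontfun f s))"
proof -
  define I where "I f t = \<xi> + integral {0..t} (\<lambda>s. G (apply_bcontfun f s))"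
    for f :: "real \<Rightarrow>\<^sub>C 'a" and t :: real
  have "\<exists>g. \<forall>t. apply_bcontfun g t = I f (clamp 0 h t)" for f
  proof -
    have "continuous_on {0..h} (\<lambda>t. integral {0..t} (\<lambda>s. G (apply_bcontfun f s)))"
      by (intro indefinite_integral_continuous_1 integrable_continuous_interval
          continuous_on_lipschitz_compose[OF lip \<open>0 \<le> L\<close>] continuous_on_apply_bcontfun)
    then have "continuous_on (cbox 0 h) (I f)"
      unfolding I_def cbox_interval by (intro continuous_on_add continuous_on_const)
    then obtain g where "\<And>t. apply_bcontfun g t = I f (clamp 0 h t)"
      by (rule continuous_on_cbox_bcontfunE) blast
    then show ?thesis by blast
  qed
  then show ?thesis
    using choice[of "\<lambda>f g. \<forall>t. apply_bcontfun g t = I f (clamp 0 h t)"] unfolding I_def by blast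
qed

lemma lipschitz_ode_short_time_solution:
  fixes G :: "'a::banach \<Rightarrow> 'a"
  assumes lip: "\<And>x y. norm (G x - G y) \<le> L * norm (x - y)"
    and "0 \<le> L" "0 \<le> h" "L * h < 1"
  shows "\<exists>y. y 0 = \<xi> \<and> (\<forall>t\<in>{0..h}. (y has_vector_derivative G (y t)) (at t within {0..h}))"
proof -
  note cont_G = continuous_on_lipschitz_compose[OF lip \<open>0 \<le> L\<close>]
  define I where "I f t = \<xi> + integral {0..t} (\<lambda>s. G (apply_bcontfun f s))"
    for f :: "real \<Rightarrow>\<^sub>C 'a" and t :: real
  obtain \<Phi> where \<Phi>: "\<And>f t. apply_bcontfun (\<Phi> f) t = I f (clamp 0 h t)"
    using picard_operator_exists[OF lip \<open>0 \<le> L\<close>, of \<xi> h] unfolding I_def by blast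
  have "dist (\<Phi> f) (\<Phi> g) \<le> (L * h) * dist f g" for f g
  proof (rule dist_bound)
    fix t
    define u where "u = clamp 0 h t"
    have u: "0 \<le> u" "u \<le> h"
      using clamp_in_interval[of 0 h t] \<open>0 \<le> h\<close> by (auto simp: u_def cbox_interval)
    have "dist (\<Phi> f t) (\<Phi> g t) = norm (integral {0..u} (\<lambda>s. G (f s)) - integral {0..u} (\<lambda>s. G (g s)))"
      by (simp add: \<Phi> I_def dist_norm u_def)
    also have "\<dots> \<le> L * dist f g * u"
      using dist_bounded[of f _ g] \<open>0 \<le> L\<close> u
      by (intro norm_integral_lipschitz_compose_diff_le[OF lip]) (auto simp: dist_norm)
    also have "\<dots> \<le> L * dist f g * h"
      using u \<open>0 \<le> L\<close> by (intro mult_left_mono) auto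
    finally show "dist (\<Phi> f t) (\<Phi> g t) \<le> (L * h) * dist f g" by (simp add: ac_simps)
  qed
  then have "\<exists>!y. \<Phi> y = y"
    using \<open>0 \<le> L\<close> \<open>0 \<le> h\<close> \<open>L * h < 1\<close> by (intro banach_fix_type[of "L * h"]) auto
  then obtain y where "\<Phi> y = y" by blast
  have y: "apply_bcontfun y t = I y t" if "t \<in> {0..h}" for t
  proof -
    have "clamp 0 h t = t" using that by (simp add: cbox_interval)
    then show ?thesis using \<Phi>[of y t] \<open>\<Phi> y = y\<close> by simp
  qed
  have "(apply_bcontfun y has_vector_derivative G (y t)) (at t within {0..h})" if t: "t \<in> {0..h}" for t
  proof -
    have "(I y has_vector_derivative G (y t)) (at t within {0..h})"
      unfolding I_def
      using integral_has_vector_derivative[OF cont_G[OF continuous_on_apply_bcontfun] t]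
      by (intro derivative_eq_intros) auto
    then show ?thesis
      by (rule has_vector_derivative_transform_within[where d = 1]) (use t y in auto)
  qed
  moreover have "apply_bcontfun y 0 = \<xi>" using y[of 0] \<open>0 \<le> h\<close> by (simp add: I_def)
  ultimately show ?thesis by blast
qed

lemma ode_solution_concat:
  fixes y z :: "real \<Rightarrow> 'a::real_normed_vector"
  assumes "0 \<le> a" "0 \<le> h"
    and y: "\<And>t. t \<in> {0..a} \<Longrightarrow> (y has_vector_derivative G (y t)) (at t within {0..a})"
    and z: "\<And>t. t \<in> {0..h} \<Longrightarrow> (z has_vector_derivative G (z t)) (at t within {0..h})"
    and "z 0 = y a" and t: "t \<in> {0..a+h}"
  shows "((\<lambda>t. if t \<in> {0..a} then y t else z (t - a)) has_vector_derivative
           G (if t \<in> {0..a} then y t else z (t - a))) (at t within {0..a+h})"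
proof -
  have closures: "closure {0..a} \<inter> closure {a..a+h} = {a}"
    using assms(1,2) by auto
  have shifted: "((\<lambda>t. z (t - a)) has_vector_derivative G (z (t - a))) (at t within {a..a+h})"
    if "t \<in> {a..a+h}" for t
  proof -
    have "((\<lambda>t. t - a) has_vector_derivative 1) (at t within {a..a+h})"
      by (auto intro!: derivative_eq_intros)
    moreover have "(z has_vector_derivative G (z (t - a))) (at (t - a) within (\<lambda>t. t - a) ` {a..a+h})"
      using z[of "t - a"] that by simp
    ultimately show ?thesis using vector_diff_chain_within by (fastforce simp: o_def)
  qed
  have "((\<lambda>t. if t \<in> {0..a} then y t else z (t - a)) has_vector_derivative
           (if t \<in> {0..a} then G (y t) else G (z (t - a)))) (at t within {0..a+h})"
    by (rule has_vector_derivative_If_within_closures[where T = "{a..a+h}"])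
      (use assms shifted in \<open>auto simp: closures insert_absorb\<close>)
  then show ?thesis by (simp add: if_distrib)
qed

lemma lipschitz_ode_solution:
  fixes G :: "'a::banach \<Rightarrow> 'a"
  assumes lip: "\<And>x y. norm (G x - G y) \<le> L * norm (x - y)" and "0 < L"
  shows "\<exists>y. y 0 = \<xi> \<and> (\<forall>t\<in>{0..T}. (y has_vector_derivative G (y t)) (at t within {0..T}))"
proof -
  define h where "h = 1 / (2 * L)"
  have h: "0 < h" "L * h < 1" using \<open>0 < L\<close> by (auto simp: h_def)
  have long_time: "\<exists>y. y 0 = \<xi> \<and> (\<forall>t\<in>{0..real (Suc n) * h}.
           (y has_vector_derivative G (y t)) (at t within {0..real (Suc n) * h}))" for n
  proof (induction n arbitrary: \<xi>)
    case 0
    then show ?case using lipschitz_ode_short_time_solution[OF lip] \<open>0 < L\<close> h by simp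
  next
    case (Suc n)
    define a where "a = real (Suc n) * h"
    obtain y where "y 0 = \<xi>"
      and y: "\<And>t. t \<in> {0..a} \<Longrightarrow> (y has_vector_derivative G (y t)) (at t within {0..a})"
      using Suc.IH[of \<xi>] unfolding a_def by blast
    obtain z where "z 0 = y a"
      and z: "\<And>t. t \<in> {0..h} \<Longrightarrow> (z has_vector_derivative G (z t)) (at t within {0..h})"
      using lipschitz_ode_short_time_solution[OF lip, of h "y a"] \<open>0 < L\<close> h by auto
    have "0 \<le> a" using h by (simp add: a_def)
    have "real (Suc (Suc n)) * h = a + h" by (simp add: a_def algebra_simps)
    then show ?case
      using ode_solution_concat[OF \<open>0 \<le> a\<close> _ y z \<open>z 0 = y a\<close>] h \<open>y 0 = \<xi>\<close> \<open>0 \<le> a\<close>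
      by (intro exI[of _ "\<lambda>t. if t \<in> {0..a} then y t else z (t - a)"]) auto
  qed
  define n where "n = nat \<lceil>T / h\<rceil>"
  have "T / h \<le> real (Suc n)" unfolding n_def by linarith
  then have "{0..T} \<subseteq> {0..real (Suc n) * h}" using h by (auto simp: divide_le_eq)
  moreover obtain y where "y 0 = \<xi>" and "\<forall>t\<in>{0..real (Suc n) * h}.
      (y has_vector_derivative G (y t)) (at t within {0..real (Suc n) * h})"
    using long_time[of n] by blast
  ultimately show ?thesis by (blast intro: has_vector_derivative_within_subset)
qed

section \<open>Lyapunov and Chetaev functions\<close>

lemma lyapunov_below_level_if_close:
  assumes upper: "\<And>x. V x \<le> M * (dist x p)\<^sup>2" and "0 < m" "0 < M"
    and "dist x p < e * sqrt (m / M)"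
  shows "V x < m * e\<^sup>2"
proof -
  have "(dist x p)\<^sup>2 < (e * sqrt (m / M))\<^sup>2"
    using assms(4) by (intro power_strict_mono) auto
  then have "M * (dist x p)\<^sup>2 < m * e\<^sup>2"
    using \<open>0 < m\<close> \<open>0 < M\<close> by (simp add: power_mult_distrib field_simps)
  then show ?thesis using upper[of x] by linarith
qed

lemma close_if_lyapunov_below_level:
  assumes lower: "\<And>x. m * (dist x p)\<^sup>2 \<le> V x" and "0 < m" "0 < e" and "V x < m * e\<^sup>2"
  shows "dist x p < e"
proof -
  have "m * (dist x p)\<^sup>2 < m * e\<^sup>2" using lower[of x] assms(4) by linarith
  then show ?thesis using \<open>0 < m\<close> \<open>0 < e\<close> by (simp add: power_less_imp_less_base)
qed

lemma lyapunov_exponential_decay: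
  fixes F :: "real \<times> real \<Rightarrow> real \<times> real" and V :: "real \<times> real \<Rightarrow> real"
  assumes V_deriv: "\<And>x. (V has_derivative DV x) (at x)"
    and lower: "\<And>x. m * (dist x p)\<^sup>2 \<le> V x" and "0 < m" and "0 < \<rho>" and "0 \<le> r"
    and decay: "\<And>x. dist x p < \<rho> \<Longrightarrow> DV x (F x) \<le> - r * V x"
    and sol: "is_solution F x T" and small: "V (x 0) < m * \<rho>\<^sup>2" and t: "t \<in> {0..<T}"
  shows "V (x t) * exp (r * t) \<le> V (x 0)"
proof -
  define g where "g s = V (x s) * exp (r * s)" for s
  have "g t \<le> g 0"
  proof (rule le_initial_if_deriv_nonpos_below_level[OF _ _ _ t])
    fix s assume s: "s \<in> {0..<T}"
    have "(x has_vector_derivative F (x s)) (at s within {0..<T})"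
      using sol s by (simp add: is_solution_def)
    from has_real_derivative_along_curve[OF V_deriv this]
    show "(g has_real_derivative (DV (x s) (F (x s)) + r * V (x s)) * exp (r * s)) (at s within {0..<T})"
      unfolding g_def by (auto intro!: derivative_eq_intros simp: algebra_simps)
    assume "g s < m * \<rho>\<^sup>2"
    moreover have "V (x s) \<le> g s"
    proof -
      have "0 \<le> V (x s)"
        using lower[of "x s"] \<open>0 < m\<close> by (meson order_trans mult_nonneg_nonneg less_imp_le zero_le_power2)
      moreover have "1 \<le> exp (r * s)" using \<open>0 \<le> r\<close> s by simp
      ultimately show ?thesis using mult_left_mono[of 1 "exp (r * s)" "V (x s)"] by (simp add: g_def)
    qed
    ultimately have "V (x s) < m * \<rho>\<^sup>2" by linarith
    then have "dist (x s) p < \<rho>" by (rule close_if_lyapunov_below_level[OF lower \<open>0 < m\<close> \<open>0 < \<rho>\<close>])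
    then have "DV (x s) (F (x s)) + r * V (x s) \<le> 0" using decay[of "x s"] by linarith
    then show "(DV (x s) (F (x s)) + r * V (x s)) * exp (r * s) \<le> 0"
      by (simp add: mult_nonpos_nonneg)
  qed (use small in \<open>simp add: g_def\<close>)
  then show ?thesis by (simp add: g_def)
qed

lemma lyapunov_stable_if_lyapunov_decay:
  fixes F :: "real \<times> real \<Rightarrow> real \<times> real" and V :: "real \<times> real \<Rightarrow> real"
  assumes V_deriv: "\<And>x. (V has_derivative DV x) (at x)"
    and lower: "\<And>x. m * (dist x p)\<^sup>2 \<le> V x" and upper: "\<And>x. V x \<le> M * (dist x p)\<^sup>2"
    and "0 < m" "0 < M" "0 < \<rho>" "0 < r"
    and decay: "\<And>x. dist x p < \<rho> \<Longrightarrow> DV x (F x) \<le> - r * V x"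
  shows "lyapunov_stable F p"
  unfolding lyapunov_stable_def
proof (intro allI impI)
  fix \<epsilon> :: real assume "0 < \<epsilon>"
  define e where "e = min \<epsilon> \<rho>"
  have e: "0 < e" "e \<le> \<epsilon>" "e \<le> \<rho>" using \<open>0 < \<epsilon>\<close> \<open>0 < \<rho>\<close> by (auto simp: e_def)
  show "\<exists>\<eta>>0. \<forall>x T. is_solution F x T \<and> dist (x 0) p < \<eta> \<longrightarrow> (\<forall>t\<in>{0..<T}. dist (x t) p < \<epsilon>)"
  proof (intro exI[of _ "e * sqrt (m / M)"] conjI allI impI ballI)
    show "0 < e * sqrt (m / M)" using e \<open>0 < m\<close> \<open>0 < M\<close> by simp
    fix x T t assume "is_solution F x T \<and> dist (x 0) p < e * sqrt (m / M)" and t: "t \<in> {0..<T}"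
    then have "is_solution F x T" and V0: "V (x 0) < m * e\<^sup>2"
      using lyapunov_below_level_if_close[OF upper \<open>0 < m\<close> \<open>0 < M\<close>] by auto
    moreover have "m * e\<^sup>2 \<le> m * \<rho>\<^sup>2" using e \<open>0 < m\<close> by (simp add: power_mono)
    ultimately have "V (x t) * exp (r * t) \<le> V (x 0)"
      using lyapunov_exponential_decay[OF V_deriv lower \<open>0 < m\<close> \<open>0 < \<rho>\<close> _ decay] \<open>0 < r\<close> t
      by force
    moreover have "V (x t) \<le> V (x t) * exp (r * t)"
    proof -
      have "0 \<le> V (x t)"
        using lower[of "x t"] \<open>0 < m\<close> by (meson order_trans mult_nonneg_nonneg less_imp_le zero_le_power2)
      then show ?thesis using \<open>0 < r\<close> t by (simp add: mult_le_cancel_left1)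
    qed
    ultimately show "dist (x t) p < \<epsilon>"
      using close_if_lyapunov_below_level[OF lower \<open>0 < m\<close> \<open>0 < e\<close>, of "x t"] V0 e by linarith
  qed
qed

lemma tendsto_if_lyapunov_decay:
  fixes F :: "real \<times> real \<Rightarrow> real \<times> real" and V :: "real \<times> real \<Rightarrow> real"
  assumes V_deriv: "\<And>x. (V has_derivative DV x) (at x)"
    and lower: "\<And>x. m * (dist x p)\<^sup>2 \<le> V x" and upper: "\<And>x. V x \<le> M * (dist x p)\<^sup>2"
    and "0 < m" "0 < M" "0 < \<rho>" "0 < r"
    and decay: "\<And>x. dist x p < \<rho> \<Longrightarrow> DV x (F x) \<le> - r * V x"
    and sol: "is_global_solution F x" and x0: "dist (x 0) p < \<rho> * sqrt (m / M)"
  shows "(x \<longlongrightarrow> p) at_top"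
proof -
  have bound: "(dist (x t) p)\<^sup>2 \<le> V (x 0) / m * exp (- (r * t))" if "0 \<le> t" for t
  proof -
    have "is_solution F x (t + 1)"
      unfolding is_solution_def
    proof
      fix s assume "s \<in> {0..<t + 1}"
      then have "(x has_vector_derivative F (x s)) (at s within {0..})"
        using sol by (simp add: is_global_solution_def)
      then show "(x has_vector_derivative F (x s)) (at s within {0..<t + 1})"
        by (rule has_vector_derivative_within_subset) auto
    qed
    then have "V (x t) * exp (r * t) \<le> V (x 0)"
      using lyapunov_exponential_decay[OF V_deriv lower \<open>0 < m\<close> \<open>0 < \<rho>\<close> _ decay]
        lyapunov_below_level_if_close[OF upper \<open>0 < m\<close> \<open>0 < M\<close> x0] \<open>0 < r\<close> that
      by force
    then have "m * (dist (x t) p)\<^sup>2 * exp (r * t) \<le> V (x 0)"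
      using lower[of "x t"] by (smt (verit) exp_gt_zero mult_right_mono)
    then show ?thesis using \<open>0 < m\<close> by (simp add: exp_minus field_simps)
  qed
  have "filterlim (\<lambda>t. r * t) at_top at_top"
    using filterlim_tendsto_pos_mult_at_top[OF tendsto_const \<open>0 < r\<close> filterlim_ident] .
  then have "filterlim (\<lambda>t. - (r * t)) at_bot at_top"
    by (simp add: filterlim_uminus_at_bot)
  then have bound_lim: "((\<lambda>t. V (x 0) / m * exp (- (r * t))) \<longlongrightarrow> 0) at_top"
    by (intro tendsto_mult_right_zero filterlim_compose[OF exp_at_bot])
  have eventually_bound: "\<forall>\<^sub>F t in at_top. (dist (x t) p)\<^sup>2 \<le> V (x 0) / m * exp (- (r * t))"
    by (rule eventually_mono[OF eventually_ge_at_top[of 0] bound])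
  have "((\<lambda>t. (dist (x t) p)\<^sup>2) \<longlongrightarrow> 0) at_top"
    by (rule tendsto_sandwich[OF _ eventually_bound tendsto_const[of "0::real"] bound_lim]) simp
  from tendsto_real_sqrt[OF this] have "((\<lambda>t. dist (x t) p) \<longlongrightarrow> 0) at_top" by simp
  then show ?thesis by (rule tendsto_dist_iff[THEN iffD2])
qed

lemma loc_asymp_stable_if_lyapunov_decay:
  fixes F :: "real \<times> real \<Rightarrow> real \<times> real" and V :: "real \<times> real \<Rightarrow> real"
  assumes "equilibrium F p"
    and V_deriv: "\<And>x. (V has_derivative DV x) (at x)"
    and lower: "\<And>x. m * (dist x p)\<^sup>2 \<le> V x" and upper: "\<And>x. V x \<le> M * (dist x p)\<^sup>2"
    and "0 < m" "0 < M" "0 < \<rho>" "0 < r"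
    and decay: "\<And>x. dist x p < \<rho> \<Longrightarrow> DV x (F x) \<le> - r * V x"
  shows "loc_asymp_stable F p"
  using \<open>equilibrium F p\<close> \<open>0 < \<rho>\<close> \<open>0 < m\<close> \<open>0 < M\<close>
    lyapunov_stable_if_lyapunov_decay[OF V_deriv lower upper \<open>0 < m\<close> \<open>0 < M\<close> \<open>0 < \<rho>\<close> \<open>0 < r\<close> decay]
    tendsto_if_lyapunov_decay[OF V_deriv lower upper \<open>0 < m\<close> \<open>0 < M\<close> \<open>0 < \<rho>\<close> \<open>0 < r\<close> decay]
  unfolding loc_asymp_stable_def by (intro conjI exI[of _ "\<rho> * sqrt (m / M)"]) auto

lemma lyapunov_exponential_growth:
  fixes F :: "real \<times> real \<Rightarrow> real \<times> real" and V :: "real \<times> real \<Rightarrow> real"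
  assumes V_deriv: "\<And>x. (V has_derivative DV x) (at x)" and "0 \<le> t"
    and sol: "\<And>s. s \<in> {0..t} \<Longrightarrow> (x has_vector_derivative F (x s)) (at s within {0..t})"
    and growth: "\<And>s. s \<in> {0..t} \<Longrightarrow> r * V (x s) \<le> DV (x s) (F (x s))"
  shows "V (x 0) * exp (r * t) \<le> V (x t)"
proof -
  define g where "g s = V (x s) * exp (- (r * s))" for s
  have "g 0 \<le> g t"
  proof (rule le_if_has_real_derivative_nonneg[OF \<open>0 \<le> t\<close>])
    fix s assume s: "s \<in> {0..t}"
    from has_real_derivative_along_curve[OF V_deriv sol[OF s]]
    show "(g has_real_derivative (DV (x s) (F (x s)) - r * V (x s)) * exp (- (r * s))) (at s within {0..t})"
      unfolding g_def by (auto intro!: derivative_eq_intros simp: algebra_simps)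
  next
    fix s assume "0 < s" "s < t"
    then show "0 \<le> (DV (x s) (F (x s)) - r * V (x s)) * exp (- (r * s))"
      using growth[of s] by simp
  qed
  then show ?thesis by (simp add: g_def exp_minus field_simps)
qed

lemma solution_until_exit_from_ball:
  fixes F :: "'a::euclidean_space \<Rightarrow> 'a"
  assumes lip: "\<forall>x\<in>cball p \<rho>. \<forall>y\<in>cball p \<rho>. norm (F x - F y) \<le> L * norm (x - y)"
    and "0 < L" "0 \<le> \<rho>"
  shows "\<exists>z. z 0 = \<xi> \<and> continuous_on {0..T} z \<and>
           (\<forall>t\<in>{0..T}. dist (z t) p \<le> \<rho> \<longrightarrow> (z has_vector_derivative F (z t)) (at t within {0..T}))"
proof -
  define \<pi> where "\<pi> = closest_point (cball p \<rho>)"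
  have \<pi>_in: "\<pi> x \<in> cball p \<rho>" for x
    unfolding \<pi>_def using \<open>0 \<le> \<rho>\<close> by (intro closest_point_in_set) auto
  have \<pi>_lip: "dist (\<pi> x) (\<pi> y) \<le> dist x y" for x y
    unfolding \<pi>_def using \<open>0 \<le> \<rho>\<close> by (intro closest_point_lipschitz) auto
  \<comment> \<open>Compose with the projection onto the ball to get a globally Lipschitz field.\<close>
  have "norm (F (\<pi> x) - F (\<pi> y)) \<le> L * norm (x - y)" for x y
    using lip \<pi>_in[of x] \<pi>_in[of y] \<pi>_lip[of x y] \<open>0 < L\<close>
    by (smt (verit, best) dist_norm mult_left_mono)
  then obtain z where "z 0 = \<xi>"
    and z: "\<forall>t\<in>{0..T}. (z has_vector_derivative F (\<pi> (z t))) (at t within {0..T})"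
    using lipschitz_ode_solution[of "\<lambda>x. F (\<pi> x)" L] \<open>0 < L\<close> by blast
  moreover have "continuous_on {0..T} z"
    using z by (intro continuous_on_vector_derivative) auto
  moreover have "\<pi> x = x" if "dist x p \<le> \<rho>" for x
    unfolding \<pi>_def using that by (intro closest_point_self) (simp add: dist_commute)
  ultimately show ?thesis by (intro exI[of _ z]) auto
qed

lemma lyapunov_growth_leaves_ball:
  fixes F :: "real \<times> real \<Rightarrow> real \<times> real" and V :: "real \<times> real \<Rightarrow> real"
  assumes V_deriv: "\<And>x. (V has_derivative DV x) (at x)" and upper: "\<And>x. V x \<le> M * (dist x p)\<^sup>2"
    and growth: "\<And>x. dist x p < \<rho> \<Longrightarrow> r * V x \<le> DV x (F x)"
    and deriv: "\<And>t. t \<in> {0..T} \<Longrightarrow> dist (z t) p \<le> \<rho> \<Longrightarrow>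
                  (z has_vector_derivative F (z t)) (at t within {0..T})"
    and "0 < V (z 0)" "0 \<le> T" and long: "M * \<rho>\<^sup>2 \<le> r * T * V (z 0)"
  shows "\<exists>t\<in>{0..T}. \<rho> \<le> dist (z t) p"
proof (rule ccontr)
  assume "\<not> ?thesis"
  then have inside: "dist (z t) p < \<rho>" if "t \<in> {0..T}" for t using that by (meson not_le)
  have "0 < M" using upper[of "z 0"] \<open>0 < V (z 0)\<close> by (smt (verit) mult_nonpos_nonneg zero_le_power2)
  have "V (z 0) * exp (r * T) \<le> V (z T)"
  proof -
    have sol: "(z has_vector_derivative F (z s)) (at s within {0..T})" if "s \<in> {0..T}" for s
      using deriv[OF that] inside[OF that] by simp
    have "r * V (z s) \<le> DV (z s) (F (z s))" if "s \<in> {0..T}" for s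
      using growth inside[OF that] by blast
    from lyapunov_exponential_growth[OF V_deriv \<open>0 \<le> T\<close> sol this] show ?thesis .
  qed
  also have "\<dots> < M * \<rho>\<^sup>2"
  proof -
    have "(dist (z T) p)\<^sup>2 < \<rho>\<^sup>2" using inside[of T] \<open>0 \<le> T\<close> by (simp add: power_strict_mono)
    then show ?thesis using upper[of "z T"] \<open>0 < M\<close> by (smt (verit) mult_strict_left_mono)
  qed
  also have "\<dots> < V (z 0) * (1 + r * T)"
    using long \<open>0 < V (z 0)\<close> by (simp add: algebra_simps)
  also have "\<dots> \<le> V (z 0) * exp (r * T)"
    using \<open>0 < V (z 0)\<close> by (intro mult_left_mono) auto
  finally show False by simp
qed

lemma lyapunov_growth_forces_exit:
  fixes F :: "real \<times> real \<Rightarrow> real \<times> real" and V :: "real \<times> real \<Rightarrow> real"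
  assumes lip: "\<forall>x\<in>cball p \<rho>. \<forall>y\<in>cball p \<rho>. norm (F x - F y) \<le> L * norm (x - y)"
    and "0 < L" "0 < \<rho>" "0 < r"
    and V_deriv: "\<And>x. (V has_derivative DV x) (at x)" and upper: "\<And>x. V x \<le> M * (dist x p)\<^sup>2"
    and growth: "\<And>x. dist x p < \<rho> \<Longrightarrow> r * V x \<le> DV x (F x)"
    and \<xi>: "dist \<xi> p < \<rho>" "0 < V \<xi>"
  shows "\<exists>z t1. z 0 = \<xi> \<and> 0 < t1 \<and> is_solution F z t1 \<and> continuous_on {0..t1} z \<and>
           \<rho> \<le> dist (z t1) p"
proof -
  have "0 < M" using upper[of \<xi>] \<xi> by (smt (verit) mult_nonpos_nonneg zero_le_power2)
  define T where "T = M * \<rho>\<^sup>2 / (r * V \<xi>)"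
  have "0 \<le> T" and long: "M * \<rho>\<^sup>2 \<le> r * T * V \<xi>"
    using \<open>0 < M\<close> \<open>0 < r\<close> \<xi> by (simp_all add: T_def)
  obtain z where "z 0 = \<xi>" and cont: "continuous_on {0..T} z"
    and deriv: "\<And>t. t \<in> {0..T} \<Longrightarrow> dist (z t) p \<le> \<rho> \<Longrightarrow>
                  (z has_vector_derivative F (z t)) (at t within {0..T})"
    using solution_until_exit_from_ball[OF lip \<open>0 < L\<close>, of \<xi> T] \<open>0 < \<rho>\<close> by auto
  then obtain t where t: "t \<in> {0..T}" "\<rho> \<le> dist (z t) p"
    using lyapunov_growth_leaves_ball[where \<rho> = \<rho> and T = T, OF V_deriv upper growth deriv _ \<open>0 \<le> T\<close>]
      \<xi> long by auto
  have "continuous_on {0..t} z"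
    using t by (simp add: continuous_on_subset[OF cont])
  then have "continuous_on {0..t} (\<lambda>s. dist (z s) p)"
    using continuous_on_dist continuous_on_const by blast
  moreover have "dist (z 0) p < \<rho>" "0 \<le> t" using \<xi> \<open>z 0 = \<xi>\<close> t by auto
  ultimately have "\<exists>t1. 0 < t1 \<and> t1 \<le> t \<and> \<rho> \<le> dist (z t1) p \<and> (\<forall>s\<in>{0..<t1}. dist (z s) p < \<rho>)"
    using t(2) by (rule first_hitting_time)
  then obtain t1 where t1: "0 < t1" "t1 \<le> t" "\<rho> \<le> dist (z t1) p"
    and before: "\<forall>s\<in>{0..<t1}. dist (z s) p < \<rho>"
    by blast
  have "is_solution F z t1"
    unfolding is_solution_def
  proof
    fix s assume "s \<in> {0..<t1}"
    then have "s \<in> {0..T}" "dist (z s) p \<le> \<rho>" using before t t1 by (auto simp: less_imp_le)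
    then have "(z has_vector_derivative F (z s)) (at s within {0..T})" by (rule deriv)
    then show "(z has_vector_derivative F (z s)) (at s within {0..<t1})"
      by (rule has_vector_derivative_within_subset) (use t t1 in auto)
  qed
  moreover have "continuous_on {0..t1} z"
    using t t1 by (intro continuous_on_subset[OF cont]) auto
  ultimately show ?thesis using t1 \<open>z 0 = \<xi>\<close> by blast
qed

lemma not_lyapunov_stable_if_lyapunov_growth:
  fixes F :: "real \<times> real \<Rightarrow> real \<times> real" and V :: "real \<times> real \<Rightarrow> real"
  assumes lip: "\<forall>x\<in>cball p \<rho>. \<forall>y\<in>cball p \<rho>. norm (F x - F y) \<le> L * norm (x - y)"
    and "0 < L" "0 < \<rho>" "0 < r"
    and V_deriv: "\<And>x. (V has_derivative DV x) (at x)" and upper: "\<And>x. V x \<le> M * (dist x p)\<^sup>2"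
    and growth: "\<And>x. dist x p < \<rho> \<Longrightarrow> r * V x \<le> DV x (F x)"
    and positive_near: "\<And>\<eta>. 0 < \<eta> \<Longrightarrow> \<exists>x. dist x p < \<eta> \<and> 0 < V x"
  shows "\<not> lyapunov_stable F p"
proof
  assume "lyapunov_stable F p"
  then have "\<exists>\<eta>>0. \<forall>x T. is_solution F x T \<and> dist (x 0) p < \<eta> \<longrightarrow>
               (\<forall>t\<in>{0..<T}. dist (x t) p < \<rho> / 2)"
    using half_gt_zero[OF \<open>0 < \<rho>\<close>] unfolding lyapunov_stable_def by blast
  then obtain \<eta> where "0 < \<eta>"
    and stable: "\<And>x T. is_solution F x T \<Longrightarrow> dist (x 0) p < \<eta> \<Longrightarrow> \<forall>t\<in>{0..<T}. dist (x t) p < \<rho> / 2"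
    by blast
  obtain x0 where x0: "dist x0 p < min \<eta> \<rho>" "0 < V x0"
    using positive_near[of "min \<eta> \<rho>"] \<open>0 < \<eta>\<close> \<open>0 < \<rho>\<close> by auto
  then have "dist x0 p < \<rho>" by simp
  then obtain z t1 where "z 0 = x0" "0 < t1" "is_solution F z t1" "continuous_on {0..t1} z"
    and exit: "\<rho> \<le> dist (z t1) p"
    using lyapunov_growth_forces_exit[OF lip \<open>0 < L\<close> \<open>0 < \<rho>\<close> \<open>0 < r\<close> V_deriv upper growth
        _ \<open>0 < V x0\<close>] by blast
  have "dist (z t1) p \<le> \<rho> / 2"
  proof (rule continuous_le_on_closure[where S = "{0..<t1}" and f = "\<lambda>t. dist (z t) p" and x = t1])
    show "continuous_on (closure {0..<t1}) (\<lambda>t. dist (z t) p)"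
      using \<open>0 < t1\<close> \<open>continuous_on {0..t1} z\<close> by (auto intro!: continuous_intros)
    show "t1 \<in> closure {0..<t1}" using \<open>0 < t1\<close> by simp
    have "\<forall>t\<in>{0..<t1}. dist (z t) p < \<rho> / 2"
      using stable[OF \<open>is_solution F z t1\<close>] x0 \<open>z 0 = x0\<close> by simp
    then show "dist (z t) p \<le> \<rho> / 2" if "t \<in> {0..<t1}" for t
      using that by (simp add: less_imp_le)
  qed
  then show False using exit \<open>0 < \<rho>\<close> by simp
qed

section \<open>Quadratic forms and planar linearisations\<close>

definition quad_form2 :: "real \<Rightarrow> real \<Rightarrow> real \<Rightarrow> real \<times> real \<Rightarrow> real" where
  "quad_form2 \<alpha> \<beta> \<gamma> y = \<alpha> * (fst y)\<^sup>2 + 2 * \<beta> * fst y * snd y + \<gamma> * (snd y)\<^sup>2"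

definition polar_form2 :: "real \<Rightarrow> real \<Rightarrow> real \<Rightarrow> real \<times> real \<Rightarrow> real \<times> real \<Rightarrow> real" where
  "polar_form2 \<alpha> \<beta> \<gamma> y z =
     \<alpha> * fst y * fst z + \<beta> * (fst y * snd z + snd y * fst z) + \<gamma> * snd y * snd z"

definition lin2 :: "real \<Rightarrow> real \<Rightarrow> real \<Rightarrow> real \<Rightarrow> real \<times> real \<Rightarrow> real \<times> real" where
  "lin2 j11 j12 j21 j22 = (\<lambda>(u, v). (j11 * u + j12 * v, j21 * u + j22 * v))"

lemma quad_form2_eq_polar_form2: "quad_form2 \<alpha> \<beta> \<gamma> y = polar_form2 \<alpha> \<beta> \<gamma> y y"
  by (simp add: quad_form2_def polar_form2_def power2_eq_square algebra_simps)

lemma quad_form2_scaleR: "quad_form2 \<alpha> \<beta> \<gamma> (s *\<^sub>R y) = s\<^sup>2 * quad_form2 \<alpha> \<beta> \<gamma> y"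
  by (simp add: quad_form2_def power2_eq_square algebra_simps)

lemma polar_form2_diff_right:
  "polar_form2 \<alpha> \<beta> \<gamma> y z - polar_form2 \<alpha> \<beta> \<gamma> y z' = polar_form2 \<alpha> \<beta> \<gamma> y (z - z')"
  by (simp add: polar_form2_def algebra_simps)

lemma norm_prod_power2: "(norm (y :: real \<times> real))\<^sup>2 = (fst y)\<^sup>2 + (snd y)\<^sup>2"
  by (cases y) (simp add: norm_Pair)

lemma abs_polar_form2_le:
  "\<bar>polar_form2 \<alpha> \<beta> \<gamma> y z\<bar> \<le> (\<bar>\<alpha>\<bar> + 2 * \<bar>\<beta>\<bar> + \<bar>\<gamma>\<bar>) * norm y * norm z"
proof -
  have comp: "\<bar>fst y\<bar> \<le> norm y" "\<bar>snd y\<bar> \<le> norm y" "\<bar>fst z\<bar> \<le> norm z" "\<bar>snd z\<bar> \<le> norm z"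
    by (metis norm_fst_le norm_snd_le prod.collapse real_norm_def)+
  have prods: "\<bar>fst y * fst z\<bar> \<le> norm y * norm z" "\<bar>fst y * snd z\<bar> \<le> norm y * norm z"
      "\<bar>snd y * fst z\<bar> \<le> norm y * norm z" "\<bar>snd y * snd z\<bar> \<le> norm y * norm z"
    using comp by (simp_all add: abs_mult mult_mono')
  have "\<bar>polar_form2 \<alpha> \<beta> \<gamma> y z\<bar> \<le> \<bar>\<alpha>\<bar> * \<bar>fst y * fst z\<bar>
      + \<bar>\<beta>\<bar> * (\<bar>fst y * snd z\<bar> + \<bar>snd y * fst z\<bar>) + \<bar>\<gamma>\<bar> * \<bar>snd y * snd z\<bar>"
  proof -
    have "\<bar>fst y * snd z + snd y * fst z\<bar> \<le> \<bar>fst y * snd z\<bar> + \<bar>snd y * fst z\<bar>"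
      by (rule abs_triangle_ineq)
    then have "\<bar>\<beta> * (fst y * snd z + snd y * fst z)\<bar> \<le> \<bar>\<beta>\<bar> * (\<bar>fst y * snd z\<bar> + \<bar>snd y * fst z\<bar>)"
      by (simp add: abs_mult mult_left_mono)
    moreover have "polar_form2 \<alpha> \<beta> \<gamma> y z
        = \<alpha> * (fst y * fst z) + \<beta> * (fst y * snd z + snd y * fst z) + \<gamma> * (snd y * snd z)"
      by (simp add: polar_form2_def algebra_simps)
    ultimately show ?thesis
      using abs_triangle_ineq[of "\<alpha> * (fst y * fst z) + \<beta> * (fst y * snd z + snd y * fst z)"
          "\<gamma> * (snd y * snd z)"]
        abs_triangle_ineq[of "\<alpha> * (fst y * fst z)" "\<beta> * (fst y * snd z + snd y * fst z)"]
      by (simp add: abs_mult)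
  qed
  also have "\<dots> \<le> \<bar>\<alpha>\<bar> * (norm y * norm z) + \<bar>\<beta>\<bar> * (norm y * norm z + norm y * norm z)
      + \<bar>\<gamma>\<bar> * (norm y * norm z)"
    using prods by (intro add_mono mult_left_mono) auto
  finally show ?thesis by (simp add: algebra_simps)
qed

lemma quad_form2_le: "quad_form2 \<alpha> \<beta> \<gamma> y \<le> (\<bar>\<alpha>\<bar> + 2 * \<bar>\<beta>\<bar> + \<bar>\<gamma>\<bar>) * (norm y)\<^sup>2"
  using abs_polar_form2_le[of \<alpha> \<beta> \<gamma> y y]
  by (simp add: quad_form2_eq_polar_form2 power2_eq_square mult.assoc)

lemma quad_form2_ge:
  assumes "0 < \<alpha>" and "0 < \<alpha> * \<gamma> - \<beta>\<^sup>2"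
  shows "(\<alpha> * \<gamma> - \<beta>\<^sup>2) / (\<alpha> + \<gamma>) * (norm y)\<^sup>2 \<le> quad_form2 \<alpha> \<beta> \<gamma> y"
proof -
  have "0 < \<gamma>" using assms by (smt (verit) mult_nonneg_nonpos zero_le_power2)
  have "(\<alpha> + \<gamma>) * quad_form2 \<alpha> \<beta> \<gamma> y - (\<alpha> * \<gamma> - \<beta>\<^sup>2) * (norm y)\<^sup>2
        = (\<alpha> * fst y + \<beta> * snd y)\<^sup>2 + (\<beta> * fst y + \<gamma> * snd y)\<^sup>2"
    unfolding quad_form2_def norm_prod_power2 by (simp add: power2_eq_square algebra_simps)
  then have "(\<alpha> * \<gamma> - \<beta>\<^sup>2) * (norm y)\<^sup>2 \<le> (\<alpha> + \<gamma>) * quad_form2 \<alpha> \<beta> \<gamma> y"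
    by (smt (verit) zero_le_power2)
  then show ?thesis using \<open>0 < \<alpha>\<close> \<open>0 < \<gamma>\<close> by (simp add: field_simps)
qed

lemma quad_form2_has_derivative:
  "((\<lambda>x. quad_form2 \<alpha> \<beta> \<gamma> (x - p)) has_derivative (\<lambda>z. 2 * polar_form2 \<alpha> \<beta> \<gamma> (x - p) z)) (at x)"
  unfolding quad_form2_def polar_form2_def
  by (auto intro!: derivative_eq_intros simp: algebra_simps)

lemma polar_form2_field_near_linearization:
  assumes jac: "is_jacobian F p j11 j12 j21 j22" and "equilibrium F p" and "0 < \<kappa>"
  shows "\<exists>\<rho>>0. \<forall>x. dist x p < \<rho> \<longrightarrow>
           \<bar>2 * polar_form2 \<alpha> \<beta> \<gamma> (x - p) (F x) - 2 * polar_form2 \<alpha> \<beta> \<gamma> (x - p) (lin2 j11 j12 j21 j22 (x - p))\<bar>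
             \<le> \<kappa> * (dist x p)\<^sup>2"
proof -
  define C where "C = \<bar>\<alpha>\<bar> + 2 * \<bar>\<beta>\<bar> + \<bar>\<gamma>\<bar> + 1"
  have "0 < C" by (simp add: C_def)
  have "(F has_derivative lin2 j11 j12 j21 j22) (at p within UNIV)"
    using jac by (simp add: is_jacobian_def lin2_def)
  moreover have "0 < \<kappa> / (2 * C)" using \<open>0 < \<kappa>\<close> \<open>0 < C\<close> by simp
  ultimately have "\<exists>\<rho>>0. \<forall>x\<in>UNIV. norm (x - p) < \<rho> \<longrightarrow>
      norm (F x - F p - lin2 j11 j12 j21 j22 (x - p)) \<le> \<kappa> / (2 * C) * norm (x - p)"
    unfolding has_derivative_within_alt by blast
  then obtain \<rho> where "0 < \<rho>" and remainder: "\<And>x. norm (x - p) < \<rho> \<Longrightarrow>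
      norm (F x - F p - lin2 j11 j12 j21 j22 (x - p)) \<le> \<kappa> / (2 * C) * norm (x - p)"
    by blast
  have "F p = 0" using \<open>equilibrium F p\<close> by (simp add: equilibrium_def zero_prod_def)
  have "\<bar>2 * polar_form2 \<alpha> \<beta> \<gamma> (x - p) (F x) - 2 * polar_form2 \<alpha> \<beta> \<gamma> (x - p) (lin2 j11 j12 j21 j22 (x - p))\<bar>
          \<le> \<kappa> * (dist x p)\<^sup>2" if "dist x p < \<rho>" for x
  proof -
    have "\<bar>2 * polar_form2 \<alpha> \<beta> \<gamma> (x - p) (F x) - 2 * polar_form2 \<alpha> \<beta> \<gamma> (x - p) (lin2 j11 j12 j21 j22 (x - p))\<bar>
        = 2 * \<bar>polar_form2 \<alpha> \<beta> \<gamma> (x - p) (F x - lin2 j11 j12 j21 j22 (x - p))\<bar>"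
      unfolding right_diff_distrib[symmetric] polar_form2_diff_right by (simp add: abs_mult)
    also have "\<dots> \<le> 2 * (C * norm (x - p) * norm (F x - lin2 j11 j12 j21 j22 (x - p)))"
      using abs_polar_form2_le[of \<alpha> \<beta> \<gamma> "x - p" "F x - lin2 j11 j12 j21 j22 (x - p)"]
        mult_right_mono[of "C - 1" C "norm (x - p) * norm (F x - lin2 j11 j12 j21 j22 (x - p))"]
      by (simp add: C_def mult.assoc)
    also have "\<dots> \<le> 2 * (C * norm (x - p) * (\<kappa> / (2 * C) * norm (x - p)))"
    proof -
      have "norm (F x - lin2 j11 j12 j21 j22 (x - p)) \<le> \<kappa> / (2 * C) * norm (x - p)"
        using remainder[of x] that \<open>F p = 0\<close> by (simp add: dist_norm)
      then show ?thesis using \<open>0 < C\<close> by (intro mult_left_mono) auto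
    qed
    also have "\<dots> = \<kappa> * (dist x p)\<^sup>2"
      using \<open>0 < C\<close> by (simp add: dist_norm power2_eq_square)
    finally show ?thesis .
  qed
  then show ?thesis using \<open>0 < \<rho>\<close> by blast
qed

lemma loc_asymp_stable_if_quadratic_lyapunov:
  assumes "equilibrium F p" and jac: "is_jacobian F p j11 j12 j21 j22"
    and "0 < \<alpha>" "0 < \<alpha> * \<gamma> - \<beta>\<^sup>2" "0 < \<mu>"
    and negdef: "\<And>y. 2 * polar_form2 \<alpha> \<beta> \<gamma> y (lin2 j11 j12 j21 j22 y) \<le> - \<mu> * (norm y)\<^sup>2"
  shows "loc_asymp_stable F p"
proof -
  define M where "M = \<bar>\<alpha>\<bar> + 2 * \<bar>\<beta>\<bar> + \<bar>\<gamma>\<bar>"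
  have "0 < M" using \<open>0 < \<alpha>\<close> by (simp add: M_def)
  have "\<exists>\<rho>>0. \<forall>x. dist x p < \<rho> \<longrightarrow>
      \<bar>2 * polar_form2 \<alpha> \<beta> \<gamma> (x - p) (F x) - 2 * polar_form2 \<alpha> \<beta> \<gamma> (x - p) (lin2 j11 j12 j21 j22 (x - p))\<bar>
        \<le> \<mu> / 2 * (dist x p)\<^sup>2"
    by (rule polar_form2_field_near_linearization[OF jac \<open>equilibrium F p\<close>]) (use \<open>0 < \<mu>\<close> in simp)
  then obtain \<rho> where "0 < \<rho>" and near: "\<And>x. dist x p < \<rho> \<Longrightarrow>
      \<bar>2 * polar_form2 \<alpha> \<beta> \<gamma> (x - p) (F x) - 2 * polar_form2 \<alpha> \<beta> \<gamma> (x - p) (lin2 j11 j12 j21 j22 (x - p))\<bar>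
        \<le> \<mu> / 2 * (dist x p)\<^sup>2"
    by blast
  show ?thesis
  proof (rule loc_asymp_stable_if_lyapunov_decay[OF \<open>equilibrium F p\<close> quad_form2_has_derivative])
    show "(\<alpha> * \<gamma> - \<beta>\<^sup>2) / (\<alpha> + \<gamma>) * (dist x p)\<^sup>2 \<le> quad_form2 \<alpha> \<beta> \<gamma> (x - p)" for x
      using quad_form2_ge[OF \<open>0 < \<alpha>\<close> \<open>0 < \<alpha> * \<gamma> - \<beta>\<^sup>2\<close>] by (simp add: dist_norm)
    show "quad_form2 \<alpha> \<beta> \<gamma> (x - p) \<le> M * (dist x p)\<^sup>2" for x
      using quad_form2_le by (simp add: M_def dist_norm)
    show "0 < (\<alpha> * \<gamma> - \<beta>\<^sup>2) / (\<alpha> + \<gamma>)"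
      using \<open>0 < \<alpha>\<close> \<open>0 < \<alpha> * \<gamma> - \<beta>\<^sup>2\<close> by (smt (verit) divide_pos_pos mult_nonneg_nonpos zero_le_power2)
    show "2 * polar_form2 \<alpha> \<beta> \<gamma> (x - p) (F x) \<le> - (\<mu> / (2 * M)) * quad_form2 \<alpha> \<beta> \<gamma> (x - p)"
      if "dist x p < \<rho>" for x
    proof -
      have "2 * polar_form2 \<alpha> \<beta> \<gamma> (x - p) (F x) \<le> - \<mu> / 2 * (dist x p)\<^sup>2"
        using near[OF that] negdef[of "x - p"] unfolding dist_norm abs_le_iff by linarith
      moreover have "\<mu> / (2 * M) * quad_form2 \<alpha> \<beta> \<gamma> (x - p) \<le> \<mu> / (2 * M) * (M * (dist x p)\<^sup>2)"
        using quad_form2_le[of \<alpha> \<beta> \<gamma> "x - p"] \<open>0 < \<mu>\<close> \<open>0 < M\<close>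
        by (intro mult_left_mono) (simp_all add: M_def dist_norm)
      ultimately show ?thesis using \<open>0 < M\<close> by simp
    qed
  qed (use \<open>0 < M\<close> \<open>0 < \<rho>\<close> \<open>0 < \<mu>\<close> in auto)
qed

lemma not_lyapunov_stable_if_quadratic_chetaev:
  assumes "equilibrium F p" and jac: "is_jacobian F p j11 j12 j21 j22"
    and lip: "\<forall>x\<in>cball p \<rho>. \<forall>y\<in>cball p \<rho>. norm (F x - F y) \<le> L * norm (x - y)"
    and "0 < \<rho>" "0 < L" "0 < \<mu>"
    and posdef: "\<And>y. \<mu> * (norm y)\<^sup>2 \<le> 2 * polar_form2 \<alpha> \<beta> \<gamma> y (lin2 j11 j12 j21 j22 y)"
    and "0 < quad_form2 \<alpha> \<beta> \<gamma> v"
  shows "\<not> lyapunov_stable F p"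
proof -
  define M where "M = \<bar>\<alpha>\<bar> + 2 * \<bar>\<beta>\<bar> + \<bar>\<gamma>\<bar> + 1"
  have "0 < M" by (simp add: M_def)
  have upper: "quad_form2 \<alpha> \<beta> \<gamma> y \<le> M * (norm y)\<^sup>2" for y
    using quad_form2_le[of \<alpha> \<beta> \<gamma> y] by (simp add: M_def distrib_right add_increasing2)
  have "\<exists>\<rho>'>0. \<forall>x. dist x p < \<rho>' \<longrightarrow>
      \<bar>2 * polar_form2 \<alpha> \<beta> \<gamma> (x - p) (F x) - 2 * polar_form2 \<alpha> \<beta> \<gamma> (x - p) (lin2 j11 j12 j21 j22 (x - p))\<bar>
        \<le> \<mu> / 2 * (dist x p)\<^sup>2"
    by (rule polar_form2_field_near_linearization[OF jac \<open>equilibrium F p\<close>]) (use \<open>0 < \<mu>\<close> in simp)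
  then obtain \<rho>' where "0 < \<rho>'" and near: "\<And>x. dist x p < \<rho>' \<Longrightarrow>
      \<bar>2 * polar_form2 \<alpha> \<beta> \<gamma> (x - p) (F x) - 2 * polar_form2 \<alpha> \<beta> \<gamma> (x - p) (lin2 j11 j12 j21 j22 (x - p))\<bar>
        \<le> \<mu> / 2 * (dist x p)\<^sup>2"
    by blast
  have "v \<noteq> 0" using \<open>0 < quad_form2 \<alpha> \<beta> \<gamma> v\<close> by (auto simp: quad_form2_def)
  show ?thesis
  proof (rule not_lyapunov_stable_if_lyapunov_growth[OF _ \<open>0 < L\<close> _ _ quad_form2_has_derivative])
    show "\<forall>x\<in>cball p (min \<rho> \<rho>'). \<forall>y\<in>cball p (min \<rho> \<rho>'). norm (F x - F y) \<le> L * norm (x - y)"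
      using lip by auto
    show "quad_form2 \<alpha> \<beta> \<gamma> (x - p) \<le> M * (dist x p)\<^sup>2" for x
      using upper by (simp add: dist_norm)
    show "\<mu> / (2 * M) * quad_form2 \<alpha> \<beta> \<gamma> (x - p) \<le> 2 * polar_form2 \<alpha> \<beta> \<gamma> (x - p) (F x)"
      if "dist x p < min \<rho> \<rho>'" for x
    proof -
      have "\<mu> / 2 * (dist x p)\<^sup>2 \<le> 2 * polar_form2 \<alpha> \<beta> \<gamma> (x - p) (F x)"
        using near[of x] that posdef[of "x - p"] unfolding dist_norm abs_le_iff by simp
      moreover have "\<mu> / (2 * M) * quad_form2 \<alpha> \<beta> \<gamma> (x - p) \<le> \<mu> / (2 * M) * (M * (dist x p)\<^sup>2)"
        using upper[of "x - p"] \<open>0 < \<mu>\<close> \<open>0 < M\<close> by (intro mult_left_mono) (simp_all add: dist_norm)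
      ultimately show ?thesis using \<open>0 < M\<close> by simp
    qed
    show "\<exists>x. dist x p < \<eta> \<and> 0 < quad_form2 \<alpha> \<beta> \<gamma> (x - p)" if "0 < \<eta>" for \<eta>
    proof (intro exI conjI)
      define s where "s = \<eta> / (2 * norm v)"
      have "0 < s" using \<open>v \<noteq> 0\<close> that by (simp add: s_def)
      show "dist (p + s *\<^sub>R v) p < \<eta>"
        using \<open>v \<noteq> 0\<close> \<open>0 < s\<close> that by (simp add: dist_norm s_def)
      show "0 < quad_form2 \<alpha> \<beta> \<gamma> (p + s *\<^sub>R v - p)"
        using \<open>0 < s\<close> \<open>0 < quad_form2 \<alpha> \<beta> \<gamma> v\<close> by (simp add: quad_form2_scaleR)
    qed
  qed (use \<open>0 < \<rho>\<close> \<open>0 < \<rho>'\<close> \<open>0 < \<mu>\<close> \<open>0 < M\<close> in auto)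
qed

lemma is_eigenvalue2_of_real_iff:
  "is_eigenvalue2 j11 j12 j21 j22 (of_real l) \<longleftrightarrow>
     l\<^sup>2 - (j11 + j22) * l + (j11 * j22 - j12 * j21) = 0"
proof -
  have "(of_real j11 - of_real l) * (of_real j22 - of_real l) - of_real j12 * of_real j21
        = (of_real ((j11 - l) * (j22 - l) - j12 * j21) :: complex)"
    by simp
  moreover have "(j11 - l) * (j22 - l) - j12 * j21 = l\<^sup>2 - (j11 + j22) * l + (j11 * j22 - j12 * j21)"
    by (simp add: power2_eq_square algebra_simps)
  ultimately show ?thesis unfolding is_eigenvalue2_def by (simp only: of_real_eq_0_iff)
qed

lemma non_hyperbolic_if_det_zero:
  assumes "equilibrium F p" and "is_jacobian F p j11 j12 j21 j22" and "j11 * j22 - j12 * j21 = 0"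
  shows "non_hyperbolic F p"
proof -
  have "is_eigenvalue2 j11 j12 j21 j22 0"
    using is_eigenvalue2_of_real_iff[of j11 j12 j21 j22 0] assms(3) by simp
  then show ?thesis
    using assms(1,2) unfolding non_hyperbolic_def
    by (intro conjI exI[of _ j11] exI[of _ j12] exI[of _ j21] exI[of _ j22] exI[of _ 0]) auto
qed

lemma saddle_if_det_neg:
  assumes "equilibrium F p" and "is_jacobian F p j11 j12 j21 j22" and det: "j11 * j22 - j12 * j21 < 0"
  shows "saddle F p"
proof -
  define \<tau> where "\<tau> = j11 + j22"
  define S where "S = sqrt (\<tau>\<^sup>2 - 4 * (j11 * j22 - j12 * j21))"
  have "0 \<le> \<tau>\<^sup>2 - 4 * (j11 * j22 - j12 * j21)" using det by (smt (verit) zero_le_power2)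
  then have S2: "S\<^sup>2 = \<tau>\<^sup>2 - 4 * (j11 * j22 - j12 * j21)" by (simp add: S_def)
  have "\<bar>\<tau>\<bar> < S"
    using det unfolding S_def by (simp add: real_less_rsqrt)
  then have "(\<tau> - S) / 2 < 0" "0 < (\<tau> + S) / 2" by auto
  moreover have "is_eigenvalue2 j11 j12 j21 j22 (of_real ((\<tau> - S) / 2))"
    "is_eigenvalue2 j11 j12 j21 j22 (of_real ((\<tau> + S) / 2))"
    unfolding is_eigenvalue2_of_real_iff \<tau>_def[symmetric]
    using S2 by (simp_all add: power2_eq_square field_simps)
  ultimately show ?thesis using assms unfolding saddle_def by blast
qed

lemma loc_asymp_stable_if_trace_neg_det_pos:
  assumes "equilibrium F p" and jac: "is_jacobian F p j11 j12 j21 j22"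
    and trace: "j11 + j22 < 0" and det: "0 < j11 * j22 - j12 * j21"
  shows "loc_asymp_stable F p"
proof -
  define \<Delta> where "\<Delta> = j11 * j22 - j12 * j21"
  \<comment> \<open>The matrix P of this form solves the Lyapunov equation J^T P + P J = 2 (j11 + j22) \<Delta> I.\<close>
  define \<alpha> where "\<alpha> = \<Delta> + j21\<^sup>2 + j22\<^sup>2"
  define \<beta> where "\<beta> = - (j11 * j21 + j12 * j22)"
  define \<gamma> where "\<gamma> = \<Delta> + j11\<^sup>2 + j12\<^sup>2"
  have "0 < \<Delta>" using det by (simp add: \<Delta>_def)
  have "\<alpha> * \<gamma> - \<beta>\<^sup>2 = \<Delta> * (2 * \<Delta> + j11\<^sup>2 + j12\<^sup>2 + j21\<^sup>2 + j22\<^sup>2)"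
    unfolding \<alpha>_def \<beta>_def \<gamma>_def \<Delta>_def by (simp add: power2_eq_square algebra_simps)
  also have "\<dots> > 0" using \<open>0 < \<Delta>\<close> by (simp add: add_pos_nonneg)
  finally have pos_def: "0 < \<alpha> * \<gamma> - \<beta>\<^sup>2" .
  have "0 < \<alpha>" using \<open>0 < \<Delta>\<close> by (simp add: \<alpha>_def add_pos_nonneg)
  moreover note pos_def
  moreover have "0 < - 2 * (j11 + j22) * \<Delta>" using trace \<open>0 < \<Delta>\<close> by (simp add: mult_neg_pos)
  moreover have "2 * polar_form2 \<alpha> \<beta> \<gamma> y (lin2 j11 j12 j21 j22 y) \<le> - (- 2 * (j11 + j22) * \<Delta>) * (norm y)\<^sup>2"
    for y
    unfolding polar_form2_def lin2_def \<alpha>_def \<beta>_def \<gamma>_def \<Delta>_def norm_prod_power2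
    by (simp add: case_prod_beta power2_eq_square algebra_simps)
  ultimately show ?thesis
    by (rule loc_asymp_stable_if_quadratic_lyapunov[OF \<open>equilibrium F p\<close> jac])
qed

lemma unstable_if_det_neg_lower_right_zero:
  assumes "equilibrium F p" and jac: "is_jacobian F p j11 j12 j21 0" and "0 < j12 * j21"
    and lip: "\<forall>x\<in>cball p \<rho>. \<forall>y\<in>cball p \<rho>. norm (F x - F y) \<le> L * norm (x - y)"
    and "0 < \<rho>" "0 < L"
  shows "unstable F p"
proof -
  \<comment> \<open>Chetaev function 2 j21 u v - j11 v^2.\<close>
  define \<mu> where "\<mu> = 2 * min (j21\<^sup>2) (j12 * j21)"
  have "j21 \<noteq> 0" using \<open>0 < j12 * j21\<close> by auto
  then have "0 < \<mu>" using \<open>0 < j12 * j21\<close> by (simp add: \<mu>_def)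
  have "\<mu> * (norm y)\<^sup>2 \<le> 2 * polar_form2 0 j21 (- j11) y (lin2 j11 j12 j21 0 y)" for y
  proof -
    have "2 * polar_form2 0 j21 (- j11) y (lin2 j11 j12 j21 0 y)
          = 2 * j21\<^sup>2 * (fst y)\<^sup>2 + 2 * (j12 * j21) * (snd y)\<^sup>2"
      by (simp add: polar_form2_def lin2_def case_prod_beta power2_eq_square algebra_simps)
    moreover have "\<mu> * (fst y)\<^sup>2 \<le> 2 * j21\<^sup>2 * (fst y)\<^sup>2" "\<mu> * (snd y)\<^sup>2 \<le> 2 * (j12 * j21) * (snd y)\<^sup>2"
      by (intro mult_right_mono; simp add: \<mu>_def)+
    ultimately show ?thesis by (simp add: norm_prod_power2 distrib_left)
  qed
  moreover have "0 < quad_form2 0 j21 (- j11) ((\<bar>j11\<bar> + 1) / j21, 1)"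
    using \<open>j21 \<noteq> 0\<close> by (simp add: quad_form2_def)
  ultimately have "\<not> lyapunov_stable F p"
    by (rule not_lyapunov_stable_if_quadratic_chetaev[OF \<open>equilibrium F p\<close> jac lip \<open>0 < \<rho>\<close> \<open>0 < L\<close> \<open>0 < \<mu>\<close>])
  then show ?thesis using \<open>equilibrium F p\<close> by (simp add: unstable_def)
qed

lemma norm_lin2_le:
  "norm (lin2 j11 j12 j21 j22 z) \<le> (\<bar>j11\<bar> + \<bar>j12\<bar> + \<bar>j21\<bar> + \<bar>j22\<bar>) * norm z"
proof -
  obtain u v where z: "z = (u, v)" by (cases z)
  have uv: "\<bar>u\<bar> \<le> norm z" "\<bar>v\<bar> \<le> norm z"
    using z by (metis norm_fst_le norm_snd_le fst_conv snd_conv real_norm_def)+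
  have "norm (lin2 j11 j12 j21 j22 z) \<le> \<bar>j11 * u + j12 * v\<bar> + \<bar>j21 * u + j22 * v\<bar>"
    using z norm_Pair_le[of "j11 * u + j12 * v" "j21 * u + j22 * v"] by (simp add: lin2_def)
  also have "\<dots> \<le> (\<bar>j11\<bar> * \<bar>u\<bar> + \<bar>j12\<bar> * \<bar>v\<bar>) + (\<bar>j21\<bar> * \<bar>u\<bar> + \<bar>j22\<bar> * \<bar>v\<bar>)"
    by (intro add_mono) (simp_all add: abs_mult[symmetric] abs_triangle_ineq)
  also have "\<dots> \<le> (\<bar>j11\<bar> * norm z + \<bar>j12\<bar> * norm z) + (\<bar>j21\<bar> * norm z + \<bar>j22\<bar> * norm z)"
    using uv by (intro add_mono mult_left_mono) auto
  finally show ?thesis by (simp add: algebra_simps)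
qed

lemma lipschitz_if_continuous_jacobian:
  fixes F :: "real \<times> real \<Rightarrow> real \<times> real"
  assumes "convex S" "compact S"
    and jac: "\<And>x. x \<in> S \<Longrightarrow> is_jacobian F x (j11 x) (j12 x) (j21 x) (j22 x)"
    and "continuous_on S j11" "continuous_on S j12" "continuous_on S j21" "continuous_on S j22"
  shows "\<exists>L>0. \<forall>x\<in>S. \<forall>y\<in>S. norm (F x - F y) \<le> L * norm (x - y)"
proof -
  define B where "B x = \<bar>j11 x\<bar> + \<bar>j12 x\<bar> + \<bar>j21 x\<bar> + \<bar>j22 x\<bar>" for x
  have "continuous_on S B" unfolding B_def using assms(4-7) by (intro continuous_intros)
  then have "bounded (B ` S)" using \<open>compact S\<close> by (intro compact_imp_bounded compact_continuous_image)
  then obtain L where "0 < L" and L: "\<And>x. x \<in> S \<Longrightarrow> B x \<le> L"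
    unfolding bounded_pos by force
  have "norm (F x - F y) \<le> L * norm (x - y)" if "x \<in> S" "y \<in> S" for x y
  proof (rule differentiable_bound[OF \<open>convex S\<close> _ _ that])
    fix z assume "z \<in> S"
    show "(F has_derivative lin2 (j11 z) (j12 z) (j21 z) (j22 z)) (at z within S)"
      using jac[OF \<open>z \<in> S\<close>] by (simp add: is_jacobian_def lin2_def has_derivative_at_withinI)
    show "onorm (lin2 (j11 z) (j12 z) (j21 z) (j22 z)) \<le> L"
      using norm_lin2_le L[OF \<open>z \<in> S\<close>]
      by (intro onorm_le order_trans[OF norm_lin2_le] mult_right_mono) (auto simp: B_def)
  qed
  then show ?thesis using \<open>0 < L\<close> by blast
qed

section \<open>The predator-prey system\<close>

definition pp_j11 :: "real \<Rightarrow> real \<Rightarrow> real \<Rightarrow> real \<Rightarrow> real \<Rightarrow> real \<Rightarrow> real \<Rightarrow> real \<Rightarrow> real" where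
  "pp_j11 r K h w a b N P =
     r * (1 - N / K - h / (w + N)) + r * N * (h / (w + N)\<^sup>2 - 1 / K) - a * P * (b - N\<^sup>2) / (b + N\<^sup>2)\<^sup>2"

definition pp_j12 :: "real \<Rightarrow> real \<Rightarrow> real \<Rightarrow> real" where
  "pp_j12 a b N = - (a * N / (b + N\<^sup>2))"

definition pp_j21 :: "real \<Rightarrow> real \<Rightarrow> real \<Rightarrow> real \<Rightarrow> real" where
  "pp_j21 b c N P = c * P * (b - N\<^sup>2) / (b + N\<^sup>2)\<^sup>2"

definition pp_j22 :: "real \<Rightarrow> real \<Rightarrow> real \<Rightarrow> real \<Rightarrow> real" where
  "pp_j22 b c \<delta> N = c * N / (b + N\<^sup>2) - \<delta>"

lemma pp_field_is_jacobian:
  assumes "K \<noteq> 0" "0 < b" "w + N \<noteq> 0"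
  shows "is_jacobian (pp_field r K h w a b c \<delta>) (N, P)
           (pp_j11 r K h w a b N P) (pp_j12 a b N) (pp_j21 b c N P) (pp_j22 b c \<delta> N)"
proof -
  have "0 < b + N\<^sup>2" using \<open>0 < b\<close> by (simp add: add_pos_nonneg)
  then have "b + N\<^sup>2 \<noteq> 0" by simp
  have field: "pp_field r K h w a b c \<delta> = (\<lambda>x.
      (r * fst x * (1 - fst x / K - h / (w + fst x)) - a * fst x * snd x / (b + (fst x)\<^sup>2),
       c * fst x * snd x / (b + (fst x)\<^sup>2) - \<delta> * snd x))"
    by (simp add: pp_field_def fun_eq_iff case_prod_beta)
  \<comment> \<open>Naming the denominators keeps field_simps from multiplying them out.\<close>
  define D where "D = b + N\<^sup>2"
  define E where "E = w + N"
  have "D \<noteq> 0" "E \<noteq> 0" using \<open>b + N\<^sup>2 \<noteq> 0\<close> assms(3) by (simp_all add: D_def E_def)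
  show ?thesis
    unfolding is_jacobian_def field
    by (rule has_derivative_eq_rhs, (rule derivative_eq_intros refl | simp add: assms \<open>b + N\<^sup>2 \<noteq> 0\<close>)+)
      (auto simp: fun_eq_iff pp_j11_def pp_j12_def pp_j21_def pp_j22_def;
        unfold D_def[symmetric] E_def[symmetric];
        simp add: field_simps \<open>D \<noteq> 0\<close> \<open>E \<noteq> 0\<close> assms(1);
        simp add: D_def algebra_simps power2_eq_square)
qed

lemma pp_field_equilibrium:
  assumes "K \<noteq> 0" "a \<noteq> 0" "w + N \<noteq> 0" "0 < b" and balance: "c * N = \<delta> * (b + N\<^sup>2)"
  shows "equilibrium (pp_field r K h w a b c \<delta>) (N, Pnull r K h w a b N)"
proof -
  have "b + N\<^sup>2 \<noteq> 0" using \<open>0 < b\<close> by (metis add_pos_nonneg less_irrefl zero_le_power2)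
  define D where "D = b + N\<^sup>2"
  define E where "E = w + N"
  have "D \<noteq> 0" "E \<noteq> 0" using \<open>b + N\<^sup>2 \<noteq> 0\<close> assms(3) by (simp_all add: D_def E_def)
  have "r * N * (1 - N / K - h / (w + N)) - a * N * Pnull r K h w a b N / (b + N\<^sup>2) = 0"
    unfolding Pnull_def D_def[symmetric] E_def[symmetric] using assms(1,2) \<open>D \<noteq> 0\<close> \<open>E \<noteq> 0\<close>
    by (simp add: field_simps) (simp add: E_def algebra_simps power2_eq_square)
  moreover have "c * N * Pnull r K h w a b N / (b + N\<^sup>2) - \<delta> * Pnull r K h w a b N = 0"
    using balance \<open>b + N\<^sup>2 \<noteq> 0\<close> by (simp add: field_simps)
  ultimately show ?thesis by (simp add: equilibrium_def pp_field_def)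
qed

lemma pp_j11_on_prey_nullcline:
  assumes "K \<noteq> 0" "a \<noteq> 0" "w + N \<noteq> 0" "0 < b"
  shows "pp_j11 r K h w a b N (Pnull r K h w a b N) = Tr r K h w a b N"
proof -
  define P where "P = Pnull r K h w a b N"
  have "b + N\<^sup>2 \<noteq> 0" using \<open>0 < b\<close> by (metis add_pos_nonneg less_irrefl zero_le_power2)
  define D where "D = b + N\<^sup>2"
  define E where "E = w + N"
  have "D \<noteq> 0" "E \<noteq> 0" using \<open>b + N\<^sup>2 \<noteq> 0\<close> assms(3) by (simp_all add: D_def E_def)
  have nullcline: "r * (1 - N / K - h / (w + N)) = a * P / (b + N\<^sup>2)"
    unfolding P_def Pnull_def D_def[symmetric] E_def[symmetric] using assms(1,2) \<open>D \<noteq> 0\<close> \<open>E \<noteq> 0\<close>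
    by (simp add: field_simps) (simp add: E_def algebra_simps power2_eq_square)
  have D_minus: "b - N\<^sup>2 = D - 2 * N\<^sup>2" by (simp add: D_def)
  have "a * P / (b + N\<^sup>2) - a * P * (b - N\<^sup>2) / (b + N\<^sup>2)\<^sup>2 = 2 * a * P * N\<^sup>2 / (b + N\<^sup>2)\<^sup>2"
    unfolding D_minus D_def[symmetric] using \<open>D \<noteq> 0\<close>
    by (simp add: field_simps) (simp add: algebra_simps power2_eq_square power4_eq_xxxx)
  then show ?thesis
    unfolding pp_j11_def Tr_def nullcline P_def[symmetric] by (simp add: algebra_simps)
qed

lemma pp_coexistence_equilibrium_jacobian:
  assumes "0 < K" "0 < a" "0 < w" "0 < b" "0 < N" and balance: "c * N = \<delta> * (b + N\<^sup>2)"
  shows "equilibrium (pp_field r K h w a b c \<delta>) (N, Pnull r K h w a b N)"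
    and "is_jacobian (pp_field r K h w a b c \<delta>) (N, Pnull r K h w a b N)
           (Tr r K h w a b N) (pp_j12 a b N) (pp_j21 b c N (Pnull r K h w a b N)) 0"
proof -
  have nz: "K \<noteq> 0" "a \<noteq> 0" "w + N \<noteq> 0" using assms by auto
  show "equilibrium (pp_field r K h w a b c \<delta>) (N, Pnull r K h w a b N)"
    using pp_field_equilibrium[OF nz \<open>0 < b\<close> balance] .
  have "0 < b + N\<^sup>2" using \<open>0 < b\<close> by (simp add: add_pos_nonneg)
  then have "pp_j22 b c \<delta> N = 0" using balance by (simp add: pp_j22_def field_simps)
  then show "is_jacobian (pp_field r K h w a b c \<delta>) (N, Pnull r K h w a b N)
           (Tr r K h w a b N) (pp_j12 a b N) (pp_j21 b c N (Pnull r K h w a b N)) 0"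
    using pp_field_is_jacobian[OF nz(1) \<open>0 < b\<close> nz(3), where r = r and h = h and a = a and c = c
        and \<delta> = \<delta> and P = "Pnull r K h w a b N"] pp_j11_on_prey_nullcline[OF nz \<open>0 < b\<close>, where r = r and h = h]
    by simp
qed

lemma pp_field_lipschitz_near:
  assumes "0 < K" "0 < b" "0 < w" "0 < N"
  shows "\<exists>L>0. \<forall>x\<in>cball (N, P) (N / 2). \<forall>y\<in>cball (N, P) (N / 2).
           norm (pp_field r K h w a b c \<delta> x - pp_field r K h w a b c \<delta> y) \<le> L * norm (x - y)"
proof (rule lipschitz_if_continuous_jacobian)
  have prey_pos: "0 < fst x" if "x \<in> cball (N, P) (N / 2)" for x
  proof -
    have "\<bar>fst x - N\<bar> \<le> dist x (N, P)"
      by (metis dist_fst_le fst_conv dist_real_def)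
    then show ?thesis using that \<open>0 < N\<close> by (auto simp: dist_commute)
  qed
  then have nz_w: "w + fst x \<noteq> 0" if "x \<in> cball (N, P) (N / 2)" for x
    using that \<open>0 < w\<close> by (smt (verit))
  have nz_b: "b + (fst x)\<^sup>2 \<noteq> 0" for x :: "real \<times> real"
    using \<open>0 < b\<close> by (smt (verit) zero_le_power2)
  show "is_jacobian (pp_field r K h w a b c \<delta>) x (pp_j11 r K h w a b (fst x) (snd x))
      (pp_j12 a b (fst x)) (pp_j21 b c (fst x) (snd x)) (pp_j22 b c \<delta> (fst x))"
    if "x \<in> cball (N, P) (N / 2)" for x
    using pp_field_is_jacobian[where N = "fst x" and P = "snd x"] nz_w[OF that] assms by simp
  show "continuous_on (cball (N, P) (N / 2)) (\<lambda>x. pp_j11 r K h w a b (fst x) (snd x))"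
    "continuous_on (cball (N, P) (N / 2)) (\<lambda>x. pp_j12 a b (fst x))"
    "continuous_on (cball (N, P) (N / 2)) (\<lambda>x. pp_j21 b c (fst x) (snd x))"
    "continuous_on (cball (N, P) (N / 2)) (\<lambda>x. pp_j22 b c \<delta> (fst x))"
    unfolding pp_j11_def pp_j12_def pp_j21_def pp_j22_def using nz_w nz_b \<open>0 < K\<close>
    by (auto intro!: continuous_intros)
qed auto

lemma N4_N5_roots:
  assumes "0 < b" "0 < c" "0 < \<delta>" and "b < (c / (2 * \<delta>))\<^sup>2"
  shows "0 < N5 b c \<delta>" "0 < N4 b c \<delta>" "(N5 b c \<delta>)\<^sup>2 < b" "b < (N4 b c \<delta>)\<^sup>2"
    "c * N4 b c \<delta> = \<delta> * (b + (N4 b c \<delta>)\<^sup>2)" "c * N5 b c \<delta> = \<delta> * (b + (N5 b c \<delta>)\<^sup>2)"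
proof -
  define s where "s = sqrt (Ddisc b c \<delta>)"
  have "b * (2 * \<delta>)\<^sup>2 < c\<^sup>2"
    using assms(3,4) by (simp add: power_divide pos_less_divide_eq)
  then have "0 < Ddisc b c \<delta>" by (simp add: Ddisc_def power_mult_distrib)
  then have s2: "s\<^sup>2 = c\<^sup>2 - 4 * b * \<delta>\<^sup>2" and "0 < s" by (simp_all add: s_def Ddisc_def)
  have "s\<^sup>2 < c\<^sup>2" using s2 assms(1,3) by simp
  then have "s < c" using \<open>0 < c\<close> by (simp add: power_less_imp_less_base)
  have N4: "N4 b c \<delta> = (c + s) / (2 * \<delta>)" and N5: "N5 b c \<delta> = (c - s) / (2 * \<delta>)"
    by (simp_all add: N4_def N5_def s_def)
  show "0 < N5 b c \<delta>" unfolding N5 using \<open>s < c\<close> \<open>0 < \<delta>\<close> by simp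
  have less: "N5 b c \<delta> < N4 b c \<delta>"
    unfolding N4 N5 using \<open>0 < s\<close> \<open>0 < \<delta>\<close> by (simp add: divide_strict_right_mono)
  then show "0 < N4 b c \<delta>" using \<open>0 < N5 b c \<delta>\<close> by simp
  have prod: "N4 b c \<delta> * N5 b c \<delta> = b"
    unfolding N4 N5 using s2 \<open>0 < \<delta>\<close> by (simp add: field_simps power2_eq_square)
  show "(N5 b c \<delta>)\<^sup>2 < b"
    using mult_strict_right_mono[OF less \<open>0 < N5 b c \<delta>\<close>] prod by (simp add: power2_eq_square)
  show "b < (N4 b c \<delta>)\<^sup>2"
    using mult_strict_left_mono[OF less, of "N4 b c \<delta>"] prod less \<open>0 < N5 b c \<delta>\<close>
    by (simp add: power2_eq_square)
  have "\<delta> * (b + ((c + s) / (2 * \<delta>))\<^sup>2) - c * ((c + s) / (2 * \<delta>))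
        = (s\<^sup>2 - c\<^sup>2 + 4 * b * \<delta>\<^sup>2) / (4 * \<delta>)"
    using \<open>0 < \<delta>\<close> by (simp add: field_simps power2_eq_square)
  then show "c * N4 b c \<delta> = \<delta> * (b + (N4 b c \<delta>)\<^sup>2)" unfolding N4 using s2 by simp
  have "\<delta> * (b + ((c - s) / (2 * \<delta>))\<^sup>2) - c * ((c - s) / (2 * \<delta>))
        = (s\<^sup>2 - c\<^sup>2 + 4 * b * \<delta>\<^sup>2) / (4 * \<delta>)"
    using \<open>0 < \<delta>\<close> by (simp add: field_simps power2_eq_square)
  then show "c * N5 b c \<delta> = \<delta> * (b + (N5 b c \<delta>)\<^sup>2)" unfolding N5 using s2 by simp
qed

lemma pp_non_hyperbolic_if_double_root:
  assumes "0 < K" "0 < a" "0 < w" "0 < b" "0 < c" "0 < \<delta>" and double: "b = (c / (2 * \<delta>))\<^sup>2"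
  shows "non_hyperbolic (pp_field r K h w a b c \<delta>) (N6 c \<delta>, Pnull r K h w a b (N6 c \<delta>))"
proof -
  have "0 < N6 c \<delta>" using \<open>0 < c\<close> \<open>0 < \<delta>\<close> by (simp add: N6_def)
  moreover have "c * N6 c \<delta> = \<delta> * (b + (N6 c \<delta>)\<^sup>2)"
    using double \<open>0 < \<delta>\<close> by (simp add: N6_def field_simps power2_eq_square)
  ultimately have eq: "equilibrium (pp_field r K h w a b c \<delta>) (N6 c \<delta>, Pnull r K h w a b (N6 c \<delta>))"
    and jac: "is_jacobian (pp_field r K h w a b c \<delta>) (N6 c \<delta>, Pnull r K h w a b (N6 c \<delta>))
      (Tr r K h w a b (N6 c \<delta>)) (pp_j12 a b (N6 c \<delta>)) (pp_j21 b c (N6 c \<delta>) (Pnull r K h w a b (N6 c \<delta>))) 0"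
    by (rule pp_coexistence_equilibrium_jacobian[OF assms(1-4)])+
  have "b - (N6 c \<delta>)\<^sup>2 = 0" using double by (simp add: N6_def)
  then show ?thesis by (intro non_hyperbolic_if_det_zero[OF eq jac]) (simp add: pp_j21_def)
qed

lemma pp_unstable_saddle_if_b_less_sq:
  assumes "0 < K" "0 < a" "0 < w" "0 < b" "0 < c" "0 < N"
    and balance: "c * N = \<delta> * (b + N\<^sup>2)" and "b < N\<^sup>2" and "0 < Pnull r K h w a b N"
  shows "unstable (pp_field r K h w a b c \<delta>) (N, Pnull r K h w a b N)"
    and "saddle (pp_field r K h w a b c \<delta>) (N, Pnull r K h w a b N)"
proof -
  note eq = pp_coexistence_equilibrium_jacobian(1)[OF assms(1-4,6) balance]
  note jac = pp_coexistence_equilibrium_jacobian(2)[OF assms(1-4,6) balance]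
  have "0 < b + N\<^sup>2" using \<open>0 < b\<close> by (simp add: add_pos_nonneg)
  then have "pp_j12 a b N < 0" "pp_j21 b c N (Pnull r K h w a b N) < 0"
    using assms by (simp_all add: pp_j12_def pp_j21_def divide_neg_pos mult_pos_neg)
  then have det: "0 < pp_j12 a b N * pp_j21 b c N (Pnull r K h w a b N)"
    by (simp add: mult_neg_neg)
  obtain L where "0 < L" and lip: "\<forall>x\<in>cball (N, Pnull r K h w a b N) (N / 2).
      \<forall>y\<in>cball (N, Pnull r K h w a b N) (N / 2).
        norm (pp_field r K h w a b c \<delta> x - pp_field r K h w a b c \<delta> y) \<le> L * norm (x - y)"
    using pp_field_lipschitz_near[OF \<open>0 < K\<close> \<open>0 < b\<close> \<open>0 < w\<close> \<open>0 < N\<close>] by blast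
  show "unstable (pp_field r K h w a b c \<delta>) (N, Pnull r K h w a b N)"
    using unstable_if_det_neg_lower_right_zero[OF eq jac det lip] \<open>0 < N\<close> \<open>0 < L\<close> by simp
  show "saddle (pp_field r K h w a b c \<delta>) (N, Pnull r K h w a b N)"
    using det by (intro saddle_if_det_neg[OF eq jac]) simp
qed

lemma pp_loc_asymp_stable_if_sq_less_b:
  assumes "0 < K" "0 < a" "0 < w" "0 < b" "0 < c" "0 < N"
    and balance: "c * N = \<delta> * (b + N\<^sup>2)" and "N\<^sup>2 < b" and "0 < Pnull r K h w a b N"
    and "Tr r K h w a b N < 0"
  shows "loc_asymp_stable (pp_field r K h w a b c \<delta>) (N, Pnull r K h w a b N)"
proof -
  have "0 < b + N\<^sup>2" using \<open>0 < b\<close> by (simp add: add_pos_nonneg)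
  then have "pp_j12 a b N < 0" "0 < pp_j21 b c N (Pnull r K h w a b N)"
    using assms by (simp_all add: pp_j12_def pp_j21_def)
  then have "0 < Tr r K h w a b N * 0 - pp_j12 a b N * pp_j21 b c N (Pnull r K h w a b N)"
    by (simp add: mult_neg_pos)
  then show ?thesis
    using pp_coexistence_equilibrium_jacobian[OF assms(1-4,6) balance] \<open>Tr r K h w a b N < 0\<close>
    by (intro loc_asymp_stable_if_trace_neg_det_pos) auto
qed

theorem theorem7:
  fixes r K h w a b c \<delta> :: real
  assumes "r > 0" "K > 0" "h > 0" "w > 0" "a > 0" "b > 0" "c > 0" "\<delta> > 0"
    and "w < K"
  shows
    "(b = (c / (2 * \<delta>))^2 \<and> Pnull r K h w a b (N6 c \<delta>) > 0 \<longrightarrow>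
        non_hyperbolic (pp_field r K h w a b c \<delta>) (N6 c \<delta>, Pnull r K h w a b (N6 c \<delta>)))
   \<and> (b < (c / (2 * \<delta>))^2 \<and> Pnull r K h w a b (N4 b c \<delta>) > 0
        \<and> Pnull r K h w a b (N5 b c \<delta>) > 0 \<longrightarrow>
        unstable (pp_field r K h w a b c \<delta>) (N4 b c \<delta>, Pnull r K h w a b (N4 b c \<delta>))
        \<and> (Tr r K h w a b (N4 b c \<delta>) < 0 \<longrightarrow>
             saddle (pp_field r K h w a b c \<delta>) (N4 b c \<delta>, Pnull r K h w a b (N4 b c \<delta>)))
        \<and> (Tr r K h w a b (N5 b c \<delta>) < 0 \<longrightarrow>
             loc_asymp_stable (pp_field r K h w a b c \<delta>) (N5 b c \<delta>, Pnull r K h w a b (N5 b c \<delta>))))"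
proof (intro conjI impI)
  assume "b = (c / (2 * \<delta>))^2 \<and> Pnull r K h w a b (N6 c \<delta>) > 0"
  then show "non_hyperbolic (pp_field r K h w a b c \<delta>) (N6 c \<delta>, Pnull r K h w a b (N6 c \<delta>))"
    using pp_non_hyperbolic_if_double_root assms by blast
next
  assume *: "b < (c / (2 * \<delta>))^2 \<and> Pnull r K h w a b (N4 b c \<delta>) > 0 \<and> Pnull r K h w a b (N5 b c \<delta>) > 0"
  note roots = N4_N5_roots[OF assms(6-8) *[THEN conjunct1]]
  note large_root = pp_unstable_saddle_if_b_less_sq[OF assms(2,5,4,6,7) roots(2,5,4)]
  show "unstable (pp_field r K h w a b c \<delta>) (N4 b c \<delta>, Pnull r K h w a b (N4 b c \<delta>))"
    using large_root(1) * by blast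
  show "saddle (pp_field r K h w a b c \<delta>) (N4 b c \<delta>, Pnull r K h w a b (N4 b c \<delta>))"
    using large_root(2) * by blast
  assume "Tr r K h w a b (N5 b c \<delta>) < 0"
  then show "loc_asymp_stable (pp_field r K h w a b c \<delta>) (N5 b c \<delta>, Pnull r K h w a b (N5 b c \<delta>))"
    using pp_loc_asymp_stable_if_sq_less_b[OF assms(2,5,4,6,7) roots(1,6,3)] * by blast
qed

end
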